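(* Let $q\in(0,1]$. Consider the parametric convex semi-infinite problem described in the context, and let $((\bar c,\bar b),\bar x)\in\operatorname{gph}\mathcal{S}$. Suppose that the Extended Nürnberger Condition (ENC) is satisfied at $((\bar c,\bar b),\bar x)$. Then $$\operatorname{clm}_q\mathcal{S}((\bar c,\bar b),\bar x)=\operatorname{clm}_q\mathcal{S}_{\bar c}(\bar b,\bar x).$$
   Context: Setting: $T$ is a compact subset of a metric space $Z$ with $T\neq Z$; $f:\mathbb{R}^n\to\mathbb{R}$ and $g_t:\mathbb{R}^n\to\mathbb{R}$ ($t\in T$) are convex, with $(t,x)\mapsto g_t(x)$ continuous on $T\times\mathbb{R}^n$. $\mathcal{C}(T,\mathbb{R})$ is the space of continuous $b:T\to\mathbb{R}$, $t\mapsto b_t$, with $\|b\|_\infty=\max_t|b_t|$. For $(c,b)\in\mathbb{R}^n\times\mathcal{C}(T,\mathbb{R})$, $P(c,b)$: minimize $f(x)+\langle c,x\rangle$ subject to $g_t(x)\le b_t$, $t\in T$. Parameter norm $\|(c,b)\|=\max\{\|c\|,\|b\|_\infty\}$ (Euclidean on $\mathbb{R}^n$). $\mathcal{S}(c,b)$ is the optimal solution set of $P(c,b)$, $\mathcal{S}_c(b):=\mathcal{S}(c,b)$. Active set $T_b(x)=\{t\in T: g_t(x)=b_t\}$. Slater condition for $P(c,b)$: some $\hat x$ has $g_t(\hat x)<b_t$ for all $t$. ENC holds at $((\bar c,\bar b),\bar x)$ if $P(\bar c,\bar b)$ satisfies the Slater condition and there is no $D\subset T_{\bar b}(\bar x)$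 with $|D|<n$ such that $-(\partial f(\bar x)+\bar c)\cap\operatorname{cone}\big(\bigcup_{t\in D}\partial g_t(\bar x)\big)\neq\emptyset$, where $\partial$ is the convex subdifferential and cone is the convex conical hull, always containing $0_n$ ($\operatorname{cone}(\emptyset)=\{0_n\}$). For a set-valued $S:Y\rightrightarrows X$ between metric spaces and $(\bar y,\bar x)\in\operatorname{gph}S$, $\operatorname{clm}_q S(\bar y,\bar x):=\liminf_{y\to\bar y,\ x\to\bar x,\ x\in S(y)} d(y,\bar y)^q/d(x,S(\bar y))$. *)

theory Defs
  imports "HOL-Analysis.Analysis"
begin

definition subdiff :: "('a::real_inner \<Rightarrow> real) \<Rightarrow> 'a \<Rightarrow> 'a set" where
  "subdiff h x = {u. \<forall>y. h y \<ge> h x + inner u (y - x)}"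

(* convex conical hull: all finite nonnegative combinations; always contains 0 *)
definition conv_cone :: "'a::real_vector set \<Rightarrow> 'a set" where
  "conv_cone A = {v. \<exists>F w. finite F \<and> F \<subseteq> A \<and> (\<forall>u\<in>F. w u \<ge> 0) \<and> v = (\<Sum>u\<in>F. w u *\<^sub>R u)}"

(* sup norm on C(T,R); equals max_{t in T} |b t| for nonempty compact T *)
definition supnorm :: "'z set \<Rightarrow> ('z \<Rightarrow> real) \<Rightarrow> real" where
  "supnorm T b = Sup (insert 0 ((\<lambda>t. \<bar>b t\<bar>) ` T))"

definition CT :: "'z::topological_space set \<Rightarrow> ('z \<Rightarrow> real) set" where
  "CT T = {b. continuous_on T b}"

definition pdist :: "'z set \<Rightarrow> ('v::real_normed_vector \<times> ('z \<Rightarrow> real)) \<Rightarrow> ('v \<times> ('z \<Rightarrow> real)) \<Rightarrow> real" where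
  "pdist T p p' = max (norm (fst p - fst p')) (supnorm T (\<lambda>t. snd p t - snd p' t))"

definition feas :: "'z set \<Rightarrow> ('z \<Rightarrow> 'v \<Rightarrow> real) \<Rightarrow> ('z \<Rightarrow> real) \<Rightarrow> 'v set" where
  "feas T g b = {x. \<forall>t\<in>T. g t x \<le> b t}"

definition optset :: "'z set \<Rightarrow> ('v::real_inner \<Rightarrow> real) \<Rightarrow> ('z \<Rightarrow> 'v \<Rightarrow> real) \<Rightarrow> 'v \<Rightarrow> ('z \<Rightarrow> real) \<Rightarrow> 'v set" where
  "optset T f g c b = {x \<in> feas T g b. \<forall>y\<in>feas T g b. f x + inner c x \<le> f y + inner c y}"

definition active :: "'z set \<Rightarrow> ('z \<Rightarrow> 'v \<Rightarrow> real) \<Rightarrow> ('z \<Rightarrow> real) \<Rightarrow> 'v \<Rightarrow> 'z set" where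
  "active T g b x = {t\<in>T. g t x = b t}"

definition slater :: "'z set \<Rightarrow> ('z \<Rightarrow> 'v \<Rightarrow> real) \<Rightarrow> ('z \<Rightarrow> real) \<Rightarrow> bool" where
  "slater T g b \<longleftrightarrow> (\<exists>xh. \<forall>t\<in>T. g t xh < b t)"

definition ENC :: "'z set \<Rightarrow> (real^'n \<Rightarrow> real) \<Rightarrow> ('z \<Rightarrow> real^'n \<Rightarrow> real) \<Rightarrow> real^'n \<Rightarrow> ('z \<Rightarrow> real) \<Rightarrow> real^'n \<Rightarrow> bool" where
  "ENC T f g c b x \<longleftrightarrow> slater T g b \<and>
     \<not> (\<exists>D. D \<subseteq> active T g b x \<and> finite D \<and> card D < CARD('n) \<and>
            ((\<lambda>u. - (u + c)) ` subdiff f x) \<inter> conv_cone (\<Union>t\<in>D. subdiff (g t) x) \<noteq> {})"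

(* quotient d(y,ybar)^q / d(x,S(ybar)), with convention a/0 = +inf *)
definition clm_quot :: "real \<Rightarrow> real \<Rightarrow> real \<Rightarrow> ereal" where
  "clm_quot q dy dx = (if dx = 0 then \<infinity> else ereal (dy powr q / dx))"

(* clm_q S(ybar,xbar) = liminf_{y->ybar, x->xbar, x in S y} d(y,ybar)^q / d(x,S(ybar)),
   for S : Y \<rightrightarrows> X, distance dY on Y *)
definition clm :: "real \<Rightarrow> 'y set \<Rightarrow> ('y \<Rightarrow> 'y \<Rightarrow> real) \<Rightarrow> ('y \<Rightarrow> 'x::metric_space set) \<Rightarrow> 'y \<Rightarrow> 'x \<Rightarrow> ereal" where
  "clm q Y dY S yb xb =
     (SUP \<delta>\<in>{0<..}. INF yx\<in>{(y,x). y \<in> Y \<and> x \<in> S y \<and> dY y yb < \<delta> \<and> dist x xb < \<delta>}.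
        clm_quot q (dY (fst yx) yb) (infdist (snd yx) (S yb)))"

end

theory Submission
  imports Defs
begin

(* Under the Slater condition a feasible x solves P(c,b) iff -(u + c) = sum_i w_i v_i with
   u in the subdifferential of f at x, each v_i a subgradient of an active constraint g_{t_i}
   and w_i >= 0; by Caratheodory's theorem n terms suffice. ENC forces every such
   representation at (cbar, bbar, xbar) to use n active constraints with positive multipliers
   and linearly independent subgradients. By compactness (multipliers are bounded thanks to
   a uniform Slater point) the representations at optimal points x of nearby problems P(c,b)
   converge to one at xbar, so for (c,b) near (cbar,bbar) and x near xbar the subgradients
   still form a basis and the multipliers stay positive: the change of cost c - cbar can be
   absorbed into the multipliers, and x also solves P(cbar,b). Hence near the reference
   point the graph of S lies in that of S_cbar with no larger parameter distance, and
   conversely S_cbar(b) = S(cbar,b) at the same distance; the two moduli coincide. *)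


section \<open>Subgradients of convex functions\<close>

lemma subdiff_add_inner:
  "v \<in> subdiff (\<lambda>y. f y + inner c y) x \<longleftrightarrow> v - c \<in> subdiff f x"
proof -
  have "inner (v - c) (y - x) = inner v (y - x) - inner c y + inner c x" for y
    by (simp add: inner_diff_left inner_diff_right)
  then show ?thesis
    unfolding subdiff_def by (smt (verit) mem_Collect_eq)
qed

lemma closed_subdiff: "closed (subdiff h x)"
proof -
  have "subdiff h x = (\<Inter>y. {u. h x + inner u (y - x) \<le> h y})"
    by (auto simp: subdiff_def)
  then show ?thesis
    by (auto intro!: closed_Collect_le continuous_intros)
qed

lemma convex_subdiff: "convex (subdiff h x)"
proof -
  have "subdiff h x = (\<Inter>y. {u. inner (y - x) u \<le> h y - h x})"
    by (auto simp: subdiff_def inner_commute algebra_simps)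
  then show ?thesis
    by (auto intro!: convex_INT convex_halfspace_le)
qed

lemma norm_subgradient_le:
  assumes v: "v \<in> subdiff h x" and M: "\<forall>y\<in>cball x 1. \<bar>h y\<bar> \<le> M"
  shows "norm v \<le> 2 * M"
proof (cases "v = 0")
  case True
  have "\<bar>h x\<bar> \<le> M"
    using M by simp
  then show ?thesis
    using True by simp
next
  case False
  define y where "y = x + (1 / norm v) *\<^sub>R v"
  have "h x + norm v = h x + inner v (y - x)"
    using False by (simp add: y_def dot_square_norm power2_eq_square)
  also have "\<dots> \<le> h y"
    using v by (simp add: subdiff_def)
  finally have "h x + norm v \<le> h y" .
  moreover have "y \<in> cball x 1"
    using False by (simp add: y_def dist_norm)
  ultimately show ?thesis
    using M[rule_format, of x] M[rule_format, of y] by simp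
qed

lemma subdiff_limit:
  assumes "\<And>y. (\<lambda>k. h k y) \<longlonglongrightarrow> H y" and "(\<lambda>k. h k (x k)) \<longlonglongrightarrow> H x0"
    and "x \<longlonglongrightarrow> x0" and "v \<longlonglongrightarrow> v0"
    and "eventually (\<lambda>k. v k \<in> subdiff (h k) (x k)) sequentially"
  shows "v0 \<in> subdiff H x0"
  unfolding subdiff_def
proof (intro CollectI allI)
  fix y
  have "(\<lambda>k. h k (x k) + inner (v k) (y - x k)) \<longlonglongrightarrow> H x0 + inner v0 (y - x0)"
    using assms by (intro tendsto_intros)
  moreover have "eventually (\<lambda>k. h k (x k) + inner (v k) (y - x k) \<le> h k y) sequentially"
    using assms(5) by eventually_elim (simp add: subdiff_def)
  ultimately show "H x0 + inner v0 (y - x0) \<le> H y"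
    using assms(1) tendsto_le sequentially_bot by blast
qed

lemma compact_imp_abs_bound:
  fixes h :: "'a::topological_space \<Rightarrow> real"
  assumes "compact K" and "continuous_on K h"
  shows "\<exists>M. \<forall>y\<in>K. \<bar>h y\<bar> \<le> M"
  using compact_imp_bounded[OF compact_continuous_image[OF assms(2,1)]]
  by (auto simp: bounded_real)

lemma convex_on_abs_bound_cball:
  fixes h :: "'a::euclidean_space \<Rightarrow> real"
  assumes "convex_on UNIV h"
  shows "\<exists>M. \<forall>y\<in>cball x r. \<bar>h y\<bar> \<le> M"
  using convex_on_continuous[OF open_UNIV assms]
  by (intro compact_imp_abs_bound) (auto intro: continuous_on_subset)

lemma compact_subdiff:
  fixes h :: "'a::euclidean_space \<Rightarrow> real"
  assumes "convex_on UNIV h"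
  shows "compact (subdiff h x)"
proof -
  obtain M where "\<forall>y\<in>cball x 1. \<bar>h y\<bar> \<le> M"
    using convex_on_abs_bound_cball[OF assms] by blast
  then have "bounded (subdiff h x)"
    using norm_subgradient_le by (force simp: bounded_iff)
  then show ?thesis
    by (simp add: closed_subdiff compact_eq_bounded_closed)
qed

lemma convex_on_ray_less:
  fixes h :: "'a::real_vector \<Rightarrow> real"
  assumes "convex_on UNIV h" and "h x \<le> r" and "h (x + \<sigma> *\<^sub>R d) < r" and "0 < s" and "s \<le> \<sigma>"
  shows "h (x + s *\<^sub>R d) < r"
proof -
  have "x + s *\<^sub>R d = (1 - s / \<sigma>) *\<^sub>R x + (s / \<sigma>) *\<^sub>R (x + \<sigma> *\<^sub>R d)"
    using assms(4,5) by (simp add: algebra_simps)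
  moreover have "0 < s / \<sigma>" "s / \<sigma> \<le> 1"
    using assms(4,5) by auto
  ultimately have "h (x + s *\<^sub>R d) \<le> (1 - s / \<sigma>) * h x + (s / \<sigma>) * h (x + \<sigma> *\<^sub>R d)"
    using convex_onD[OF assms(1)] by (metis UNIV_I less_imp_le)
  also have "\<dots> < (1 - s / \<sigma>) * r + (s / \<sigma>) * r"
    using assms(2,3) \<open>0 < s / \<sigma>\<close> \<open>s / \<sigma> \<le> 1\<close>
    by (intro add_le_less_mono mult_left_mono mult_strict_left_mono) auto
  finally show ?thesis
    by (simp add: algebra_simps)
qed

text \<open>Separate the epigraph of \<open>h\<close> from the half-strip below \<open>h x\<close> over the ray
  \<open>x + \<sigma> d\<close>. The hyperplane is not vertical because the epigraph projects onto the whole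
  space, so it is the graph of an affine minorant of \<open>h\<close>.\<close>

lemma ray_epigraph_separation:
  fixes h :: "'a::euclidean_space \<Rightarrow> real"
  assumes convex: "convex_on UNIV h" and no_descent: "\<And>\<sigma>. 0 \<le> \<sigma> \<Longrightarrow> h x \<le> h (x + \<sigma> *\<^sub>R d)"
  shows "\<exists>a \<beta>. 0 < \<beta> \<and> (\<forall>y. inner a x + \<beta> * h x \<le> inner a y + \<beta> * h y) \<and> inner a d \<le> 0"
proof -
  define L where "L = ((\<lambda>\<sigma>. x + \<sigma> *\<^sub>R d) ` {0..}) \<times> {..<h x}"
  define E where "E = epigraph UNIV h"
  have "convex ((\<lambda>\<sigma>. \<sigma> *\<^sub>R d) ` {0..})"
    by (rule convex_linear_image) (simp_all add: linear_scaleR_left)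
  then have "convex ((+) x ` (\<lambda>\<sigma>. \<sigma> *\<^sub>R d) ` {0..})"
    by (rule convex_translation)
  then have "convex L"
    unfolding L_def image_image by (intro convex_Times) simp_all
  moreover have "convex E"
    unfolding E_def using convex by (rule convex_epigraphI)
  moreover have "(x, h x - 1) \<in> L" and "(x, h x) \<in> E"
    unfolding L_def E_def epigraph_def by (force intro: image_eqI[where x = 0])+
  moreover have "L \<inter> E = {}"
    unfolding L_def E_def epigraph_def using no_descent by (force simp: not_le)
  ultimately obtain a b where "a \<noteq> 0" and aL: "\<forall>z\<in>L. inner a z \<le> b" and aE: "\<forall>z\<in>E. b \<le> inner a z"
    using separating_hyperplane_sets by (metis empty_iff)
  obtain a1 a2 where a: "a = (a1, a2)" by fastforce
  have above: "b \<le> inner a1 y + a2 * r" if "h y \<le> r" for y r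
    using aE that unfolding E_def epigraph_def a by auto
  have below: "inner a1 (x + \<sigma> *\<^sub>R d) + a2 * r \<le> b" if "0 \<le> \<sigma>" "r < h x" for \<sigma> r
    using aL that unfolding L_def a by auto
  have "0 \<le> a2"
    using above[of x "h x"] below[of 0 "h x - 1"] by (simp add: algebra_simps)
  moreover have "a2 \<noteq> 0"
  proof
    assume "a2 = 0"
    then have "a1 \<noteq> 0" and "inner a1 (x - a1) \<ge> b" and "inner a1 x \<le> b"
      using \<open>a \<noteq> 0\<close> a above[of "x - a1" "h (x - a1)"] below[of 0 "h x - 1"]
      by (auto simp: zero_prod_def)
    then show False
      by (smt (verit) inner_diff_right inner_gt_zero_iff)
  qed
  ultimately have "0 < a2"
    by simp
  have below': "inner a1 (x + \<sigma> *\<^sub>R d) + a2 * h x \<le> b" if "0 \<le> \<sigma>" for \<sigma>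
  proof (rule field_le_epsilon)
    fix e :: real assume "0 < e"
    then show "inner a1 (x + \<sigma> *\<^sub>R d) + a2 * h x \<le> b + e"
      using below[OF that, of "h x - e / a2"] \<open>0 < a2\<close> by (simp add: algebra_simps)
  qed
  have "inner a1 x + a2 * h x \<le> inner a1 y + a2 * h y" for y
    using above[of y "h y"] below'[of 0] by simp
  moreover have "inner a1 d \<le> 0"
    using below'[of 1] above[of x "h x"] by (simp add: inner_add_right)
  ultimately show ?thesis
    using \<open>0 < a2\<close> by blast
qed

lemma descent_direction:
  fixes h :: "'a::euclidean_space \<Rightarrow> real"
  assumes convex: "convex_on UNIV h" and downhill: "\<forall>v\<in>subdiff h x. inner v d < 0"
  shows "\<exists>\<sigma>>0. h (x + \<sigma> *\<^sub>R d) < h x"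
proof (rule ccontr)
  assume "\<not> ?thesis"
  then have "h x \<le> h (x + \<sigma> *\<^sub>R d)" if "0 \<le> \<sigma>" for \<sigma>
    using that by (cases "\<sigma> = 0") (auto simp: not_less dest: spec[of _ \<sigma>])
  then obtain a \<beta> where "0 < \<beta>" and minorant: "\<forall>y. inner a x + \<beta> * h x \<le> inner a y + \<beta> * h y"
    and "inner a d \<le> 0"
    using ray_epigraph_separation[OF convex] by blast
  define v where "v = (- 1 / \<beta>) *\<^sub>R a"
  have "h x + inner v (y - x) \<le> h y" for y
    using minorant[rule_format, of y] \<open>0 < \<beta>\<close>
    by (simp add: v_def inner_diff_right field_simps)
  then have "v \<in> subdiff h x"
    by (simp add: subdiff_def)
  moreover have "0 \<le> inner v d"
    using \<open>inner a d \<le> 0\<close> \<open>0 < \<beta>\<close> by (simp add: v_def divide_nonpos_pos)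
  ultimately show False
    using downhill by force
qed

lemma subdiff_nonempty:
  fixes h :: "'a::euclidean_space \<Rightarrow> real"
  assumes "convex_on UNIV h"
  shows "subdiff h x \<noteq> {}"
  using descent_direction[OF assms, of x 0] by auto

lemma convex_on_step_below:
  fixes h :: "'a::euclidean_space \<Rightarrow> real"
  assumes convex: "convex_on UNIV h" and "h x \<le> r"
    and downhill: "h x = r \<Longrightarrow> \<forall>v\<in>subdiff h x. inner v d < 0"
  shows "\<exists>\<sigma>>0. h (x + \<sigma> *\<^sub>R d) < r"
proof (cases "h x = r")
  case True
  then show ?thesis
    using descent_direction[OF convex downhill] by auto
next
  case False
  then have "h x < r"
    using \<open>h x \<le> r\<close> by simp
  moreover have "continuous_on UNIV h"
    using convex_on_continuous[OF open_UNIV convex] .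
  then have "((\<lambda>\<sigma>. h (x + \<sigma> *\<^sub>R d)) \<longlongrightarrow> h (x + 0 *\<^sub>R d)) (at_right 0)"
    by (intro continuous_on_tendsto_compose[of UNIV h] tendsto_intros) auto
  ultimately have "eventually (\<lambda>\<sigma>. h (x + \<sigma> *\<^sub>R d) < r) (at_right 0)"
    by (simp add: order_tendstoD(2))
  then show ?thesis
    unfolding eventually_at_right_field by (metis field_lbound_gt_zero less_eq_real_def)
qed


section \<open>Continuously parametrised constraints\<close>

lemma parametric_abs_bound_cball:
  fixes g :: "'z::topological_space \<Rightarrow> 'a::euclidean_space \<Rightarrow> real"
  assumes "compact T" and "continuous_on (T \<times> UNIV) (\<lambda>(t, x). g t x)"
  shows "\<exists>M. \<forall>t\<in>T. \<forall>y\<in>cball x r. \<bar>g t y\<bar> \<le> M"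
proof -
  have "continuous_on (T \<times> cball x r) (\<lambda>(t, x). g t x)"
    using assms(2) by (rule continuous_on_subset) auto
  then obtain M where "\<forall>p\<in>T \<times> cball x r. \<bar>(\<lambda>(t, x). g t x) p\<bar> \<le> M"
    using compact_imp_abs_bound assms(1) compact_Times compact_cball by metis
  then show ?thesis
    by auto
qed

lemma tendsto_parametric:
  fixes g :: "'z::topological_space \<Rightarrow> 'a::topological_space \<Rightarrow> real"
  assumes "continuous_on (T \<times> UNIV) (\<lambda>(t, x). g t x)"
    and "\<tau> \<longlonglongrightarrow> t" and "t \<in> T" and "\<forall>k. \<tau> k \<in> T" and "x \<longlonglongrightarrow> x0"
  shows "(\<lambda>k. g (\<tau> k) (x k)) \<longlonglongrightarrow> g t x0"
proof -
  have "(\<lambda>k. (\<lambda>(t, x). g t x) (\<tau> k, x k)) \<longlonglongrightarrow> (\<lambda>(t, x). g t x) (t, x0)"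
    using assms by (intro continuous_on_tendsto_compose[OF assms(1)] tendsto_Pair) auto
  then show ?thesis
    by simp
qed

lemma continuous_on_parametric:
  assumes "continuous_on (T \<times> UNIV) (\<lambda>(t, x). g t x)"
  shows "continuous_on T (\<lambda>t. g t y)"
proof -
  have "continuous_on T (\<lambda>t. (\<lambda>(t, x). g t x) (t, y))"
    by (rule continuous_on_compose2[OF assms]) (auto intro!: continuous_intros)
  then show ?thesis
    by simp
qed

lemma closed_active_subgradients:
  fixes g :: "'z::metric_space \<Rightarrow> 'a::euclidean_space \<Rightarrow> real"
  assumes T: "compact T" and g: "continuous_on (T \<times> UNIV) (\<lambda>(t, x). g t x)"
    and b: "continuous_on T b"
  shows "closed (\<Union>t\<in>active T g b x. subdiff (g t) x)" (is "closed ?A")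
  unfolding closed_sequential_limits
proof (intro allI impI, elim conjE)
  fix v v0 assume v: "\<forall>k. v k \<in> ?A" and lim: "v \<longlonglongrightarrow> v0"
  then have "\<forall>k. \<exists>t. t \<in> active T g b x \<and> v k \<in> subdiff (g t) x"
    by blast
  then obtain \<tau> where \<tau>: "\<And>k. \<tau> k \<in> active T g b x \<and> v k \<in> subdiff (g (\<tau> k)) x"
    by metis
  then have "\<forall>k. \<tau> k \<in> T"
    by (simp add: active_def)
  then obtain t r where t: "t \<in> T" "strict_mono r" "(\<tau> \<circ> r) \<longlonglongrightarrow> t"
    using seq_compactE[OF compact_imp_seq_compact[OF T], of \<tau>] by blast
  have \<tau>r: "\<forall>k. (\<tau> \<circ> r) k \<in> T"
    using \<open>\<forall>k. \<tau> k \<in> T\<close> by simp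
  have lim_g: "(\<lambda>k. g ((\<tau> \<circ> r) k) y) \<longlonglongrightarrow> g t y" for y
    using tendsto_parametric[OF g t(3,1) \<tau>r tendsto_const] .
  have "(\<lambda>k. b ((\<tau> \<circ> r) k)) \<longlonglongrightarrow> b t"
    using continuous_on_tendsto_compose[OF b t(3,1)] \<tau>r by simp
  moreover have "(\<lambda>k. b ((\<tau> \<circ> r) k)) = (\<lambda>k. g ((\<tau> \<circ> r) k) x)"
    using \<tau> by (simp add: active_def)
  ultimately have "g t x = b t"
    using lim_g LIMSEQ_unique by metis
  then have "t \<in> active T g b x"
    using t(1) by (simp add: active_def)
  moreover have "v0 \<in> subdiff (g t) x"
  proof (rule subdiff_limit)
    show "(\<lambda>k. g ((\<tau> \<circ> r) k) y) \<longlonglongrightarrow> g t y" for y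
      by (rule lim_g)
    show "(v \<circ> r) \<longlonglongrightarrow> v0"
      using LIMSEQ_subseq_LIMSEQ[OF lim t(2)] .
    show "\<forall>\<^sub>F k in sequentially. (v \<circ> r) k \<in> subdiff (g ((\<tau> \<circ> r) k)) ((\<lambda>_. x) k)"
      using \<tau> by simp
  qed (rule lim_g, rule tendsto_const)
  ultimately show "v0 \<in> ?A"
    by blast
qed

lemma compact_active_subgradients:
  fixes g :: "'z::metric_space \<Rightarrow> 'a::euclidean_space \<Rightarrow> real"
  assumes T: "compact T" and g: "continuous_on (T \<times> UNIV) (\<lambda>(t, x). g t x)"
    and b: "continuous_on T b"
  shows "compact (\<Union>t\<in>active T g b x. subdiff (g t) x)"
proof -
  obtain M where "\<forall>t\<in>T. \<forall>y\<in>cball x 1. \<bar>g t y\<bar> \<le> M"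
    using parametric_abs_bound_cball[OF T g] by blast
  then have "bounded (\<Union>t\<in>active T g b x. subdiff (g t) x)"
    using norm_subgradient_le by (force simp: bounded_iff active_def)
  then show ?thesis
    using closed_active_subgradients[OF T g b] by (simp add: compact_eq_bounded_closed)
qed

lemma slater_uniform_margin:
  fixes g :: "'z::topological_space \<Rightarrow> 'a::topological_space \<Rightarrow> real"
  assumes T: "compact T" and g: "continuous_on (T \<times> UNIV) (\<lambda>(t, x). g t x)"
    and b: "continuous_on T b" and "slater T g b"
  shows "\<exists>xh \<epsilon>. 0 < \<epsilon> \<and> (\<forall>t\<in>T. g t xh \<le> b t - \<epsilon>)"
proof -
  obtain xh where xh: "\<forall>t\<in>T. g t xh < b t"
    using assms(4) by (auto simp: slater_def)
  show ?thesis
  proof (cases "T = {}")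
    case False
    have "continuous_on T (\<lambda>t. (\<lambda>(t, x). g t x) (t, xh))"
      by (rule continuous_on_compose2[OF g]) (auto intro: continuous_intros)
    then have "continuous_on T (\<lambda>t. b t - g t xh)"
      by (intro continuous_intros b) simp
    then obtain t0 where "t0 \<in> T" and "\<forall>t\<in>T. b t0 - g t0 xh \<le> b t - g t xh"
      using continuous_attains_inf[OF T False] by blast
    then show ?thesis
      using xh by (intro exI[of _ xh] exI[of _ "b t0 - g t0 xh"]) force
  qed (auto intro: exI[of _ 1])
qed

lemma slater_zero_notin_convex_hull_active:
  assumes "slater T g b"
  shows "0 \<notin> convex hull (\<Union>t\<in>active T g b x. subdiff (g t) x)"
proof -
  obtain xh where xh: "\<forall>t\<in>T. g t xh < b t"
    using assms by (auto simp: slater_def)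
  have "(\<Union>t\<in>active T g b x. subdiff (g t) x) \<subseteq> {v. inner (xh - x) v < 0}"
  proof clarify
    fix t v assume "t \<in> active T g b x" and "v \<in> subdiff (g t) x"
    then have "g t x = b t" and "g t xh < b t" and "g t x + inner v (xh - x) \<le> g t xh"
      using xh by (auto simp: active_def subdiff_def)
    then show "inner (xh - x) v < 0"
      by (simp add: inner_commute)
  qed
  then have "convex hull (\<Union>t\<in>active T g b x. subdiff (g t) x) \<subseteq> {v. inner (xh - x) v < 0}"
    by (simp add: convex_halfspace_lt hull_minimal)
  then show ?thesis
    by auto
qed

lemma uniform_feasible_step:
  fixes g :: "'z::topological_space \<Rightarrow> 'a::real_normed_vector \<Rightarrow> real"
  assumes T: "compact T" and convex: "\<forall>t\<in>T. convex_on UNIV (g t)"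
    and g: "continuous_on (T \<times> UNIV) (\<lambda>(t, x). g t x)" and b: "continuous_on T b"
    and feasible: "\<forall>t\<in>T. g t x \<le> b t" and step: "\<forall>t\<in>T. \<exists>\<sigma>>0. g t (x + \<sigma> *\<^sub>R d) < b t"
  shows "\<exists>s>0. \<forall>s'\<in>{0<..s}. \<forall>t\<in>T. g t (x + s' *\<^sub>R d) \<le> b t"
proof -
  obtain \<sigma> where \<sigma>: "\<forall>t\<in>T. 0 < \<sigma> t \<and> g t (x + \<sigma> t *\<^sub>R d) < b t"
    using step by metis
  define V where "V t = {t'\<in>T. 0 < b t' - g t' (x + \<sigma> t *\<^sub>R d)}" for t
  have "\<exists>U. open U \<and> U \<inter> T = V t" for t
  proof -
    have "continuous_on T (\<lambda>t'. b t' - g t' (x + \<sigma> t *\<^sub>R d))"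
      by (intro continuous_intros b continuous_on_parametric[OF g])
    then obtain U where "open U" "U \<inter> T = (\<lambda>t'. b t' - g t' (x + \<sigma> t *\<^sub>R d)) -` {0<..} \<inter> T"
      unfolding continuous_on_open_invariant by (meson open_greaterThan)
    moreover have "(\<lambda>t'. b t' - g t' (x + \<sigma> t *\<^sub>R d)) -` {0<..} \<inter> T = V t"
      by (auto simp: V_def)
    ultimately show ?thesis
      by auto
  qed
  then obtain U where U: "\<And>t. open (U t) \<and> U t \<inter> T = V t"
    by metis
  have "T \<subseteq> (\<Union>t\<in>T. U t)"
    using \<sigma> U by (auto simp: V_def)
  then obtain T' where T': "T' \<subseteq> T" "finite T'" "T \<subseteq> (\<Union>t\<in>T'. U t)"
    using compactE_image[OF T, of T U] U by metis
  define s where "s = Min (insert 1 (\<sigma> ` T'))"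
  have s: "0 < s" "\<forall>t\<in>T'. s \<le> \<sigma> t"
    using T' \<sigma> by (auto simp: s_def)
  have "g t' (x + s' *\<^sub>R d) < b t'" if "0 < s'" "s' \<le> s" "t' \<in> T" for s' t'
  proof -
    obtain t where "t \<in> T'" "t' \<in> V t"
      using T' U \<open>t' \<in> T\<close> by blast
    then show ?thesis
      using convex_on_ray_less[of "g t'" x "b t'" "\<sigma> t"] convex feasible T' s that
      by (force simp: V_def)
  qed
  then show ?thesis
    using s(1) by (force intro: less_imp_le)
qed


section \<open>KKT certificates\<close>

lemma zero_notin_convex_hull_imp_direction:
  fixes S :: "'a::euclidean_space set"
  assumes "compact S" and "0 \<notin> convex hull S"
  shows "\<exists>d. \<forall>z\<in>S. inner z d < 0"
proof -
  obtain a \<beta> where "0 < \<beta>" and a: "\<forall>z\<in>convex hull S. \<beta> < inner a z"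
    using separating_hyperplane_closed_0[OF convex_convex_hull
        compact_imp_closed[OF compact_convex_hull[OF assms(1)]] assms(2)] by blast
  have "inner z (- a) < 0" if "z \<in> S" for z
    using a hull_inc[OF that] \<open>0 < \<beta>\<close> by (fastforce simp: inner_commute)
  then show ?thesis
    by blast
qed

lemma convex_combination_zero_split:
  fixes P A :: "'a::real_vector set"
  assumes P: "convex P" and A: "0 \<notin> convex hull A"
    and S: "finite S" "S \<subseteq> P \<union> A"
    and \<alpha>: "\<forall>v\<in>S. 0 \<le> \<alpha> v" "sum \<alpha> S = 1" "(\<Sum>v\<in>S. \<alpha> v *\<^sub>R v) = 0"
  shows "S \<inter> P \<noteq> {} \<and> (\<exists>p\<in>P. \<exists>w. (\<forall>v\<in>S - P. 0 \<le> w v) \<and> - p = (\<Sum>v\<in>S - P. w v *\<^sub>R v))"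
proof -
  define S1 where "S1 = S \<inter> P"
  define S2 where "S2 = S - P"
  have S12: "finite S1" "finite S2" "S2 \<subseteq> A" "S1 \<subseteq> S"
    using S by (auto simp: S1_def S2_def)
  have split: "sum h S = sum h S1 + sum h S2" for h :: "'a \<Rightarrow> 'b::comm_monoid_add"
    unfolding S1_def S2_def using sum.Int_Diff[OF S(1)] .
  define \<mu> where "\<mu> = sum \<alpha> S1"
  have "\<mu> \<noteq> 0"
  proof
    assume "\<mu> = 0"
    moreover have "\<forall>v\<in>S1. 0 \<le> \<alpha> v"
      using \<alpha>(1) S12(4) by blast
    ultimately have "\<forall>v\<in>S1. \<alpha> v = 0"
      by (simp add: \<mu>_def sum_nonneg_eq_0_iff[OF S12(1)])
    then have "sum \<alpha> S2 = 1" and "(\<Sum>v\<in>S2. \<alpha> v *\<^sub>R v) = 0"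
      using \<alpha> split[of \<alpha>] split[of "\<lambda>v. \<alpha> v *\<^sub>R v"] \<open>\<mu> = 0\<close> by (simp_all add: \<mu>_def)
    then have "0 \<in> convex hull S2"
      using \<alpha>(1) S12 by (auto simp: convex_hull_finite S2_def)
    then show False
      using hull_mono[OF S12(3)] A by blast
  qed
  then have \<mu>: "0 < \<mu>"
    using \<alpha>(1) S12 by (simp add: \<mu>_def order_less_le sum_nonneg subset_eq)
  define p where "p = (\<Sum>v\<in>S1. (\<alpha> v / \<mu>) *\<^sub>R v)"
  have "p \<in> P"
    unfolding p_def
  proof (rule convex_sum[OF S12(1) P])
    show "(\<Sum>v\<in>S1. \<alpha> v / \<mu>) = 1"
      using \<mu> by (simp add: \<mu>_def flip: sum_divide_distrib)
  qed (use \<alpha>(1) S12 \<mu> in \<open>auto simp: S1_def\<close>)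
  have "(\<Sum>v\<in>S2. \<alpha> v *\<^sub>R v) = - (\<mu> *\<^sub>R p)"
    using \<mu> \<alpha>(3) split[of "\<lambda>v. \<alpha> v *\<^sub>R v"]
    by (simp add: p_def scaleR_sum_right eq_neg_iff_add_eq_0 add.commute)
  moreover have "(1 / \<mu>) *\<^sub>R (\<Sum>v\<in>S2. \<alpha> v *\<^sub>R v) = (\<Sum>v\<in>S2. (\<alpha> v / \<mu>) *\<^sub>R v)"
    by (simp add: scaleR_sum_right)
  ultimately have "- p = (\<Sum>v\<in>S2. (\<alpha> v / \<mu>) *\<^sub>R v)"
    using \<mu> by simp
  moreover have "S1 \<noteq> {}"
    using \<mu> by (auto simp: \<mu>_def)
  ultimately show ?thesis
    using \<open>p \<in> P\<close> \<alpha>(1) \<mu> unfolding S1_def S2_def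
    by (intro conjI bexI[of _ p] exI[of _ "\<lambda>v. \<alpha> v / \<mu>"]) auto
qed

definition KKT_certificate ::
  "'z set \<Rightarrow> ('a::real_inner \<Rightarrow> real) \<Rightarrow> ('z \<Rightarrow> 'a \<Rightarrow> real) \<Rightarrow> 'a \<Rightarrow> ('z \<Rightarrow> real) \<Rightarrow> 'a \<Rightarrow>
    'a \<Rightarrow> ('i::finite \<Rightarrow> 'z) \<Rightarrow> ('i \<Rightarrow> 'a) \<Rightarrow> ('i \<Rightarrow> real) \<Rightarrow> bool" where
  "KKT_certificate T f g c b x u \<tau> \<nu> \<omega> \<longleftrightarrow>
     u \<in> subdiff f x \<and>
     (\<forall>i. \<tau> i \<in> T \<and> \<nu> i \<in> subdiff (g (\<tau> i)) x \<and> 0 \<le> \<omega> i \<and> (0 < \<omega> i \<longrightarrow> g (\<tau> i) x = b (\<tau> i))) \<and>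
     - (u + c) = (\<Sum>i\<in>UNIV. \<omega> i *\<^sub>R \<nu> i)"

lemma KKT_certificate_imp_optimal:
  assumes feasible: "x \<in> feas T g b" and cert: "KKT_certificate T f g c b x u \<tau> \<nu> \<omega>"
  shows "x \<in> optset T f g c b"
  unfolding optset_def
proof (intro CollectI conjI ballI feasible)
  fix y assume y: "y \<in> feas T g b"
  have "\<omega> i * inner (\<nu> i) (y - x) \<le> 0" for i
  proof (cases "\<omega> i = 0")
    case False
    then have "0 < \<omega> i" and "g (\<tau> i) x = b (\<tau> i)" and "\<tau> i \<in> T"
      and "g (\<tau> i) x + inner (\<nu> i) (y - x) \<le> g (\<tau> i) y"
      using cert by (auto simp: KKT_certificate_def subdiff_def order_le_less)
    moreover have "g (\<tau> i) y \<le> b (\<tau> i)"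
      using y \<open>\<tau> i \<in> T\<close> by (simp add: feas_def)
    ultimately show ?thesis
      by (simp add: mult_nonneg_nonpos)
  qed simp
  then have "inner (\<Sum>i\<in>UNIV. \<omega> i *\<^sub>R \<nu> i) (y - x) \<le> 0"
    by (simp add: inner_sum_left sum_nonpos)
  moreover have "(\<Sum>i\<in>UNIV. \<omega> i *\<^sub>R \<nu> i) = - (u + c)"
    using cert by (simp add: KKT_certificate_def)
  ultimately have "0 \<le> inner (u + c) (y - x)"
    by (simp only: inner_minus_left neg_le_0_iff_le)
  moreover have "f x + inner u (y - x) \<le> f y"
    using cert by (simp add: KKT_certificate_def subdiff_def)
  ultimately show "f x + inner c x \<le> f y + inner c y"
    by (simp add: inner_add_left inner_diff_right)
qed

lemma KKT_certificate_multiplier_sum_le: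
  assumes cert: "KKT_certificate T f g c b x u \<tau> \<nu> \<omega>" and margin: "\<forall>t\<in>T. g t xh \<le> b t - \<epsilon>"
  shows "\<epsilon> * (\<Sum>i\<in>UNIV. \<omega> i) \<le> norm (u + c) * dist xh x"
proof -
  have "\<omega> i * inner (\<nu> i) (xh - x) \<le> \<omega> i * - \<epsilon>" for i
  proof (cases "\<omega> i = 0")
    case False
    then have "0 < \<omega> i" and "g (\<tau> i) x = b (\<tau> i)" and "g (\<tau> i) xh \<le> b (\<tau> i) - \<epsilon>"
      and "g (\<tau> i) x + inner (\<nu> i) (xh - x) \<le> g (\<tau> i) xh"
      using cert margin by (auto simp: KKT_certificate_def subdiff_def order_le_less)
    then show ?thesis
      by (intro mult_left_mono) auto
  qed simp
  then have "(\<Sum>i\<in>UNIV. \<omega> i * inner (\<nu> i) (xh - x)) \<le> (\<Sum>i\<in>UNIV. \<omega> i * - \<epsilon>)"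
    by (rule sum_mono)
  then have "inner (\<Sum>i\<in>UNIV. \<omega> i *\<^sub>R \<nu> i) (xh - x) \<le> - \<epsilon> * (\<Sum>i\<in>UNIV. \<omega> i)"
    by (simp add: inner_sum_left sum_distrib_left mult.commute)
  moreover have "(\<Sum>i\<in>UNIV. \<omega> i *\<^sub>R \<nu> i) = - (u + c)"
    using cert by (simp add: KKT_certificate_def)
  moreover have "inner (u + c) (xh - x) \<le> norm (u + c) * dist xh x"
    by (metis dist_norm norm_cauchy_schwarz)
  ultimately show ?thesis
    by (simp only: inner_minus_left)
qed

lemma optimal_imp_Fritz_John:
  fixes f :: "'a::euclidean_space \<Rightarrow> real" and g :: "'z::metric_space \<Rightarrow> 'a \<Rightarrow> real"
  assumes T: "compact T" and convex_f: "convex_on UNIV f" and convex_g: "\<forall>t\<in>T. convex_on UNIV (g t)"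
    and g: "continuous_on (T \<times> UNIV) (\<lambda>(t, x). g t x)" and b: "continuous_on T b"
    and opt: "x \<in> optset T f g c b"
  shows "0 \<in> convex hull ((+) c ` subdiff f x \<union> (\<Union>t\<in>active T g b x. subdiff (g t) x))"
proof (rule ccontr)
  let ?P = "(+) c ` subdiff f x" and ?A = "\<Union>t\<in>active T g b x. subdiff (g t) x"
  assume "0 \<notin> convex hull (?P \<union> ?A)"
  moreover have "compact (?P \<union> ?A)"
    using compact_subdiff[OF convex_f] compact_active_subgradients[OF T g b]
    by (intro compact_Un compact_translation)
  ultimately obtain d where downhill: "\<forall>z\<in>?P \<union> ?A. inner z d < 0"
    using zero_notin_convex_hull_imp_direction by blast
  define \<phi> where "\<phi> = (\<lambda>y. f y + inner c y)"
  have convex_\<phi>: "convex_on UNIV \<phi>"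
    unfolding \<phi>_def by (intro convex_on_add convex_f) (simp add: convex_on_def inner_add_right)
  have "inner v d < 0" if "v \<in> subdiff \<phi> x" for v
  proof -
    have "c + (v - c) \<in> ?P"
      using that subdiff_add_inner unfolding \<phi>_def by blast
    then show ?thesis
      using downhill by simp
  qed
  then obtain \<sigma>0 where \<sigma>0: "0 < \<sigma>0" "\<phi> (x + \<sigma>0 *\<^sub>R d) < \<phi> x"
    using descent_direction[OF convex_\<phi>] by blast
  have feasible: "\<forall>t\<in>T. g t x \<le> b t"
    using opt by (simp add: optset_def feas_def)
  have "\<forall>t\<in>T. \<exists>\<sigma>>0. g t (x + \<sigma> *\<^sub>R d) < b t"
  proof
    fix t assume "t \<in> T"
    then show "\<exists>\<sigma>>0. g t (x + \<sigma> *\<^sub>R d) < b t"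
      using convex_g feasible downhill by (intro convex_on_step_below) (auto simp: active_def)
  qed
  then obtain s where s: "0 < s" "\<forall>s'\<in>{0<..s}. \<forall>t\<in>T. g t (x + s' *\<^sub>R d) \<le> b t"
    using uniform_feasible_step[OF T convex_g g b feasible] by blast
  then have "x + min s \<sigma>0 *\<^sub>R d \<in> feas T g b"
    using \<sigma>0(1) by (simp add: feas_def)
  then have "\<phi> x \<le> \<phi> (x + min s \<sigma>0 *\<^sub>R d)"
    using opt by (simp add: optset_def \<phi>_def)
  moreover have "\<phi> (x + min s \<sigma>0 *\<^sub>R d) < \<phi> x"
    using convex_on_ray_less[OF convex_\<phi> order_refl \<sigma>0(2)] s(1) \<sigma>0(1) by simp
  ultimately show False
    by simp
qed

lemma optimal_imp_KKT_cone:
  fixes f :: "'a::euclidean_space \<Rightarrow> real" and g :: "'z::metric_space \<Rightarrow> 'a \<Rightarrow> real"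
  assumes T: "compact T" and convex_f: "convex_on UNIV f" and convex_g: "\<forall>t\<in>T. convex_on UNIV (g t)"
    and g: "continuous_on (T \<times> UNIV) (\<lambda>(t, x). g t x)" and b: "continuous_on T b"
    and opt: "x \<in> optset T f g c b" and slater: "slater T g b"
  shows "\<exists>u\<in>subdiff f x. \<exists>F w. finite F \<and> card F \<le> DIM('a) \<and>
           F \<subseteq> (\<Union>t\<in>active T g b x. subdiff (g t) x) \<and> (\<forall>v\<in>F. 0 \<le> w v) \<and>
           - (u + c) = (\<Sum>v\<in>F. w v *\<^sub>R v)"
proof -
  let ?P = "(+) c ` subdiff f x" and ?A = "\<Union>t\<in>active T g b x. subdiff (g t) x"
  obtain S \<alpha> where S: "finite S" "S \<subseteq> ?P \<union> ?A" "card S \<le> DIM('a) + 1"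
    and \<alpha>: "\<forall>v\<in>S. 0 \<le> \<alpha> v" "sum \<alpha> S = 1" "(\<Sum>v\<in>S. \<alpha> v *\<^sub>R v) = 0"
    using optimal_imp_Fritz_John[OF T convex_f convex_g g b opt]
    unfolding convex_hull_caratheodory by blast
  have "convex ?P"
    by (intro convex_translation convex_subdiff)
  then obtain p w where "S \<inter> ?P \<noteq> {}" and "p \<in> ?P" and w: "\<forall>v\<in>S - ?P. 0 \<le> w v"
    and p: "- p = (\<Sum>v\<in>S - ?P. w v *\<^sub>R v)"
    using convex_combination_zero_split[OF _ slater_zero_notin_convex_hull_active[OF slater] S(1,2) \<alpha>]
    by blast
  then obtain u where "u \<in> subdiff f x" and "p = c + u"
    by blast
  moreover have "card (S - ?P) \<le> DIM('a)"
    using S(1,3) \<open>S \<inter> ?P \<noteq> {}\<close> card_Diff_subset_Int[of S ?P] card_gt_0_iff[of "S \<inter> ?P"] by simp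
  moreover have "S - ?P \<subseteq> ?A"
    using S(2) by blast
  ultimately show ?thesis
    using S(1) w p by (intro bexI[of _ u] exI[of _ "S - ?P"] exI[of _ w]) (simp_all add: add.commute)
qed

lemma optimal_imp_KKT_certificate:
  fixes f :: "real^'n \<Rightarrow> real" and g :: "'z::metric_space \<Rightarrow> real^'n \<Rightarrow> real"
  assumes T: "compact T" and convex_f: "convex_on UNIV f" and convex_g: "\<forall>t\<in>T. convex_on UNIV (g t)"
    and g: "continuous_on (T \<times> UNIV) (\<lambda>(t, x). g t x)" and b: "continuous_on T b"
    and opt: "x \<in> optset T f g c b" and slater: "slater T g b" and "T \<noteq> {}"
  shows "\<exists>u \<tau> \<nu> (\<omega> :: 'n \<Rightarrow> real). KKT_certificate T f g c b x u \<tau> \<nu> \<omega>"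
proof -
  obtain u F w where u: "u \<in> subdiff f x" and F: "finite F" "card F \<le> CARD('n)"
    "F \<subseteq> (\<Union>t\<in>active T g b x. subdiff (g t) x)" "\<forall>v\<in>F. 0 \<le> w v" "- (u + c) = (\<Sum>v\<in>F. w v *\<^sub>R v)"
    using optimal_imp_KKT_cone[OF assms(1-7)] by auto
  obtain e :: "real^'n \<Rightarrow> 'n" where e: "inj_on e F"
    using card_le_inj[OF F(1) finite_class.finite_UNIV] F(2) by auto
  have "\<forall>v\<in>F. \<exists>t. t \<in> active T g b x \<and> v \<in> subdiff (g t) x"
    using F(3) by blast
  then obtain tv where tv: "\<forall>v\<in>F. tv v \<in> active T g b x \<and> v \<in> subdiff (g (tv v)) x"
    by (rule bchoice[THEN exE]) blast
  obtain t0 v0 where t0: "t0 \<in> T" "v0 \<in> subdiff (g t0) x"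
    using \<open>T \<noteq> {}\<close> subdiff_nonempty convex_g by blast
  define \<nu> where "\<nu> i = (if i \<in> e ` F then inv_into F e i else v0)" for i
  define \<tau> where "\<tau> i = (if i \<in> e ` F then tv (\<nu> i) else t0)" for i
  define \<omega> where "\<omega> i = (if i \<in> e ` F then w (\<nu> i) else 0)" for i
  have \<nu>F: "\<nu> i \<in> F" if "i \<in> e ` F" for i
    using that by (simp add: \<nu>_def inv_into_into)
  have \<nu>0: "\<nu> i = v0" if "i \<notin> e ` F" for i
    using that by (simp add: \<nu>_def)
  have "(\<Sum>i\<in>UNIV. \<omega> i *\<^sub>R \<nu> i) = (\<Sum>i\<in>e ` F. \<omega> i *\<^sub>R \<nu> i)"
    by (rule sum.mono_neutral_right) (auto simp: \<omega>_def)
  also have "\<dots> = (\<Sum>v\<in>F. w v *\<^sub>R v)"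
    using e by (simp add: sum.reindex \<omega>_def \<nu>_def)
  finally have "KKT_certificate T f g c b x u \<tau> \<nu> \<omega>"
    using u F(4,5) tv t0 \<nu>F \<nu>0 by (auto simp: KKT_certificate_def \<tau>_def \<omega>_def active_def)
  then show ?thesis
    by blast
qed


section \<open>Limits of KKT certificates\<close>

lemma finite_family_convergent_subseq:
  fixes s :: "nat \<Rightarrow> 'i::finite \<Rightarrow> 'a::metric_space"
  assumes K: "compact K" and s: "\<forall>k i. s k i \<in> K"
  shows "\<exists>r l. strict_mono r \<and> (\<forall>i. l i \<in> K \<and> (\<lambda>k. s (r k) i) \<longlonglongrightarrow> l i)"
proof -
  have "\<exists>r l. strict_mono r \<and> (\<forall>i\<in>I. l i \<in> K \<and> (\<lambda>k. s (r k) i) \<longlonglongrightarrow> l i)" for I :: "'i set"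
    using finite[of I]
  proof (induction I rule: finite_induct)
    case empty
    show ?case
      using strict_mono_id by blast
  next
    case (insert j I)
    then obtain r l where r: "strict_mono r" "\<forall>i\<in>I. l i \<in> K \<and> (\<lambda>k. s (r k) i) \<longlonglongrightarrow> l i"
      by blast
    obtain lj r' where lj: "lj \<in> K" "strict_mono r'" "((\<lambda>k. s (r k) j) \<circ> r') \<longlonglongrightarrow> lj"
      using seq_compactE[OF compact_imp_seq_compact[OF K], of "\<lambda>k. s (r k) j"] s by blast
    have "(\<lambda>k. s ((r \<circ> r') k) i) \<longlonglongrightarrow> (l(j := lj)) i" if "i \<in> insert j I" for i
    proof (cases "i = j")
      case False
      then have "((\<lambda>k. s (r k) i) \<circ> r') \<longlonglongrightarrow> l i"
        using that r(2) LIMSEQ_subseq_LIMSEQ[OF _ lj(2)] by blast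
      then show ?thesis
        using False by (simp add: o_def)
    qed (use lj in \<open>simp add: o_def\<close>)
    moreover have "(l(j := lj)) i \<in> K" if "i \<in> insert j I" for i
      using that r(2) lj(1) by auto
    ultimately show ?case
      using strict_mono_o[OF r(1) lj(2)] by blast
  qed
  then show ?thesis
    by blast
qed

lemma uniform_limit_tendsto_compose:
  fixes bs :: "nat \<Rightarrow> 'z::topological_space \<Rightarrow> 'a::real_normed_vector"
  assumes "uniform_limit T bs b sequentially" and "continuous_on T b"
    and "\<tau> \<longlonglongrightarrow> t" and "t \<in> T" and "\<forall>k. \<tau> k \<in> T"
  shows "(\<lambda>k. bs k (\<tau> k)) \<longlonglongrightarrow> b t"
proof -
  have "(\<lambda>k. bs k (\<tau> k) - b (\<tau> k)) \<longlonglongrightarrow> 0"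
  proof (rule tendstoI)
    fix e :: real assume "0 < e"
    show "\<forall>\<^sub>F k in sequentially. dist (bs k (\<tau> k) - b (\<tau> k)) 0 < e"
      by (rule eventually_mono[OF uniform_limitD[OF assms(1) \<open>0 < e\<close>]])
        (use assms(5) in \<open>simp add: dist_norm\<close>)
  qed
  moreover have "(\<lambda>k. b (\<tau> k)) \<longlonglongrightarrow> b t"
    using continuous_on_tendsto_compose[OF assms(2,3,4)] assms(5) by simp
  ultimately have "(\<lambda>k. b (\<tau> k) + (bs k (\<tau> k) - b (\<tau> k))) \<longlonglongrightarrow> b t + 0"
    by (intro tendsto_add)
  then show ?thesis
    by simp
qed

lemma KKT_certificate_limit:
  fixes f :: "'a::euclidean_space \<Rightarrow> real" and g :: "'z::metric_space \<Rightarrow> 'a \<Rightarrow> real"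
  assumes convex_f: "convex_on UNIV f" and g: "continuous_on (T \<times> UNIV) (\<lambda>(t, x). g t x)"
    and b: "continuous_on T b" and bs: "uniform_limit T bs b sequentially"
    and cert: "\<forall>k. KKT_certificate T f g (cs k) (bs k) (xs k) (us k) (\<tau>s k) (\<nu>s k) (\<omega>s k)"
    and cs: "cs \<longlonglongrightarrow> c" and xs: "xs \<longlonglongrightarrow> x" and us: "us \<longlonglongrightarrow> u"
    and \<tau>s: "\<forall>i. (\<lambda>k. \<tau>s k i) \<longlonglongrightarrow> \<tau> i" and \<tau>: "\<forall>i. \<tau> i \<in> T"
    and \<nu>s: "\<forall>i. (\<lambda>k. \<nu>s k i) \<longlonglongrightarrow> \<nu> i" and \<omega>s: "\<forall>i. (\<lambda>k. \<omega>s k i) \<longlonglongrightarrow> \<omega> i"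
  shows "KKT_certificate T f g c b x u \<tau> \<nu> \<omega>"
proof -
  have \<tau>sT: "\<forall>k. \<tau>s k i \<in> T" for i
    using cert by (simp add: KKT_certificate_def)
  have lim_g: "(\<lambda>k. g (\<tau>s k i) (ys k)) \<longlonglongrightarrow> g (\<tau> i) y" if "ys \<longlonglongrightarrow> y" for i ys y
    using tendsto_parametric[OF g _ _ \<tau>sT that] \<tau>s \<tau> by blast
  have "continuous_on UNIV f"
    by (rule convex_on_continuous[OF open_UNIV convex_f])
  then have "(\<lambda>k. f (xs k)) \<longlonglongrightarrow> f x"
    using continuous_on_tendsto_compose[OF _ xs, of UNIV f] by simp
  then have "u \<in> subdiff f x"
    using cert by (intro subdiff_limit[of "\<lambda>_. f" f xs x us u] xs us) (simp_all add: KKT_certificate_def)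
  moreover have "\<nu> i \<in> subdiff (g (\<tau> i)) x" for i
    using cert lim_g xs \<nu>s
    by (intro subdiff_limit[of "\<lambda>k. g (\<tau>s k i)" _ xs x "\<lambda>k. \<nu>s k i"]) (simp_all add: KKT_certificate_def)
  moreover have "0 \<le> \<omega> i" for i
    using cert \<omega>s by (intro LIMSEQ_le_const[of "\<lambda>k. \<omega>s k i"]) (auto simp: KKT_certificate_def)
  moreover have "g (\<tau> i) x = b (\<tau> i)" if "0 < \<omega> i" for i
  proof -
    have "eventually (\<lambda>k. 0 < \<omega>s k i) sequentially"
      using order_tendstoD(1)[OF \<omega>s[rule_format, of i] that] .
    then have "eventually (\<lambda>k. bs k (\<tau>s k i) = g (\<tau>s k i) (xs k)) sequentially"
      by (rule eventually_mono) (use cert in \<open>simp add: KKT_certificate_def\<close>)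
    moreover have "(\<lambda>k. bs k (\<tau>s k i)) \<longlonglongrightarrow> b (\<tau> i)"
      using uniform_limit_tendsto_compose[OF bs b] \<tau>s \<tau> \<tau>sT by blast
    ultimately have "(\<lambda>k. g (\<tau>s k i) (xs k)) \<longlonglongrightarrow> b (\<tau> i)"
      by (rule Lim_transform_eventually[rotated])
    then show ?thesis
      using LIMSEQ_unique lim_g[OF xs] by blast
  qed
  moreover have "- (u + c) = (\<Sum>i\<in>UNIV. \<omega> i *\<^sub>R \<nu> i)"
  proof (rule LIMSEQ_unique)
    show "(\<lambda>k. - (us k + cs k)) \<longlonglongrightarrow> - (u + c)"
      by (intro tendsto_intros us cs)
    have "(\<lambda>k. \<Sum>i\<in>UNIV. \<omega>s k i *\<^sub>R \<nu>s k i) \<longlonglongrightarrow> (\<Sum>i\<in>UNIV. \<omega> i *\<^sub>R \<nu> i)"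
      using \<omega>s \<nu>s by (intro tendsto_intros) auto
    then show "(\<lambda>k. - (us k + cs k)) \<longlonglongrightarrow> (\<Sum>i\<in>UNIV. \<omega> i *\<^sub>R \<nu> i)"
      using cert by (simp add: KKT_certificate_def)
  qed
  ultimately show ?thesis
    using \<tau> by (simp add: KKT_certificate_def)
qed

lemma KKT_certificate_subgradients_bounded:
  assumes cert: "KKT_certificate T f g c b x u \<tau> \<nu> \<omega>"
    and Mf: "\<forall>y\<in>cball x 1. \<bar>f y\<bar> \<le> Mf" and Mg: "\<forall>t\<in>T. \<forall>y\<in>cball x 1. \<bar>g t y\<bar> \<le> Mg"
  shows "norm u \<le> 2 * Mf" and "norm (\<nu> i) \<le> 2 * Mg"
proof -
  show "norm u \<le> 2 * Mf"
    using cert Mf by (intro norm_subgradient_le[of _ f x]) (simp_all add: KKT_certificate_def)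
  have "\<tau> i \<in> T" and "\<nu> i \<in> subdiff (g (\<tau> i)) x"
    using cert by (simp_all add: KKT_certificate_def)
  then show "norm (\<nu> i) \<le> 2 * Mg"
    using Mg by (intro norm_subgradient_le[of _ "g (\<tau> i)" x]) auto
qed

lemma KKT_certificates_bounded:
  fixes f :: "'a::euclidean_space \<Rightarrow> real" and g :: "'z::metric_space \<Rightarrow> 'a \<Rightarrow> real"
  assumes T: "compact T" and convex_f: "convex_on UNIV f" and g: "continuous_on (T \<times> UNIV) (\<lambda>(t, x). g t x)"
    and cs: "cs \<longlonglongrightarrow> c" and xs: "xs \<longlonglongrightarrow> x"
    and margin: "0 < \<epsilon>" "\<forall>k. \<forall>t\<in>T. g t xh \<le> bs k t - \<epsilon>"
    and cert: "\<forall>k. KKT_certificate T f g (cs k) (bs k) (xs k) (us k) (\<tau>s k) (\<nu>s k) (\<omega>s k)"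
  shows "\<exists>B. \<forall>k. norm (us k) \<le> B \<and> (\<forall>i. norm (\<nu>s k i) \<le> B \<and> \<omega>s k i \<le> B)"
proof -
  obtain R where R: "\<forall>k. dist x (xs k) \<le> R"
    using convergent_imp_bounded[OF xs] by (auto simp: bounded_any_center[of _ x])
  obtain C where C: "\<forall>k. norm (cs k) \<le> C"
    using convergent_imp_bounded[OF cs] by (auto simp: bounded_iff)
  have ball: "cball (xs k) 1 \<subseteq> cball x (R + 1)" for k
  proof
    fix y assume "y \<in> cball (xs k) 1"
    then show "y \<in> cball x (R + 1)"
      using R[rule_format, of k] dist_triangle[of x y "xs k"] by simp
  qed
  obtain Mf where Mf: "\<forall>y\<in>cball x (R + 1). \<bar>f y\<bar> \<le> Mf"
    using convex_on_abs_bound_cball[OF convex_f] by blast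
  obtain Mg where Mg: "\<forall>t\<in>T. \<forall>y\<in>cball x (R + 1). \<bar>g t y\<bar> \<le> Mg"
    using parametric_abs_bound_cball[OF T g] by blast
  have Mf': "\<forall>y\<in>cball (xs k) 1. \<bar>f y\<bar> \<le> Mf" and Mg': "\<forall>t\<in>T. \<forall>y\<in>cball (xs k) 1. \<bar>g t y\<bar> \<le> Mg"
    for k
    using ball[of k] Mf Mg by blast+
  have u: "norm (us k) \<le> 2 * Mf" and \<nu>: "norm (\<nu>s k i) \<le> 2 * Mg" for k i
    using KKT_certificate_subgradients_bounded[OF cert[rule_format, of k] Mf' Mg'] by blast+
  define W where "W = (2 * Mf + C) * (dist xh x + R) / \<epsilon>"
  have \<omega>: "\<omega>s k i \<le> W" for k i
  proof -
    have "\<epsilon> * (\<Sum>j\<in>UNIV. \<omega>s k j) \<le> norm (us k + cs k) * dist xh (xs k)"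
      using cert margin(2) by (intro KKT_certificate_multiplier_sum_le) auto
    moreover have "norm (us k + cs k) \<le> 2 * Mf + C"
      using norm_triangle_ineq[of "us k" "cs k"] u[of k] C[rule_format, of k] by linarith
    moreover have "dist xh (xs k) \<le> dist xh x + R"
      using dist_triangle[of xh "xs k" x] R[rule_format, of k] by linarith
    ultimately have "\<epsilon> * (\<Sum>j\<in>UNIV. \<omega>s k j) \<le> (2 * Mf + C) * (dist xh x + R)"
      by (smt (verit) mult_mono norm_ge_zero zero_le_dist)
    then have "(\<Sum>j\<in>UNIV. \<omega>s k j) \<le> W"
      using margin(1) by (simp add: W_def pos_le_divide_eq mult.commute)
    moreover have "\<omega>s k i \<le> (\<Sum>j\<in>UNIV. \<omega>s k j)"
      using cert by (intro member_le_sum) (auto simp: KKT_certificate_def)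
    ultimately show ?thesis
      by linarith
  qed
  show ?thesis
    using u \<nu> \<omega> by (intro exI[of _ "max (2 * Mf) (max (2 * Mg) W)"]) (simp add: le_max_iff_disj)
qed

lemma KKT_certificates_convergent_subseq:
  fixes f :: "'a::euclidean_space \<Rightarrow> real" and g :: "'z::metric_space \<Rightarrow> 'a \<Rightarrow> real"
    and \<omega>s :: "nat \<Rightarrow> 'i::finite \<Rightarrow> real"
  assumes T: "compact T" and convex_f: "convex_on UNIV f"
    and g: "continuous_on (T \<times> UNIV) (\<lambda>(t, x). g t x)" and b: "continuous_on T b"
    and cs: "cs \<longlonglongrightarrow> c" and xs: "xs \<longlonglongrightarrow> x" and bs: "uniform_limit T bs b sequentially"
    and cert: "\<forall>k. KKT_certificate T f g (cs k) (bs k) (xs k) (us k) (\<tau>s k) (\<nu>s k) (\<omega>s k)"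
    and bound: "\<forall>k. norm (us k) \<le> B \<and> (\<forall>i. norm (\<nu>s k i) \<le> B \<and> \<omega>s k i \<le> B)"
  shows "\<exists>r u \<tau> \<nu> \<omega>. strict_mono r \<and> KKT_certificate T f g c b x u \<tau> \<nu> \<omega> \<and>
           (\<forall>i. (\<lambda>k. \<nu>s (r k) i) \<longlonglongrightarrow> \<nu> i) \<and> (\<forall>i. (\<lambda>k. \<omega>s (r k) i) \<longlonglongrightarrow> \<omega> i)"
proof -
  define K where "K = T \<times> cball (0::'a) B \<times> {0..B}"
  have "compact K"
    unfolding K_def by (intro compact_Times T compact_cball compact_Icc)
  moreover have "\<forall>k i. (\<tau>s k i, \<nu>s k i, \<omega>s k i) \<in> K"
    using cert bound by (simp add: K_def KKT_certificate_def)
  ultimately obtain r1 l where r1: "strict_mono r1"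
    and l: "\<forall>i. l i \<in> K \<and> (\<lambda>k. (\<tau>s (r1 k) i, \<nu>s (r1 k) i, \<omega>s (r1 k) i)) \<longlonglongrightarrow> l i"
    using finite_family_convergent_subseq[of K "\<lambda>k i. (\<tau>s k i, \<nu>s k i, \<omega>s k i)"] by blast
  have "\<forall>k. us (r1 k) \<in> cball 0 B"
    using bound by simp
  then obtain u r2 where r2: "strict_mono r2" and "((\<lambda>k. us (r1 k)) \<circ> r2) \<longlonglongrightarrow> u"
    by (rule seq_compactE[OF compact_imp_seq_compact[OF compact_cball]])
  then have u: "(\<lambda>k. us (r1 (r2 k))) \<longlonglongrightarrow> u"
    by (simp add: o_def)
  define r where "r = r1 \<circ> r2"
  have r: "strict_mono r"
    unfolding r_def using r1 r2 by (rule strict_mono_o)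
  define \<tau> where "\<tau> i = fst (l i)" for i
  define \<nu> where "\<nu> i = fst (snd (l i))" for i
  define \<omega> where "\<omega> i = snd (snd (l i))" for i
  have lim_l: "(\<lambda>k. (\<tau>s (r k) i, \<nu>s (r k) i, \<omega>s (r k) i)) \<longlonglongrightarrow> l i" for i
    using LIMSEQ_subseq_LIMSEQ[OF _ r2, of "\<lambda>k. (\<tau>s (r1 k) i, \<nu>s (r1 k) i, \<omega>s (r1 k) i)"] l
    by (simp add: r_def o_def)
  have lim_\<nu>: "(\<lambda>k. \<nu>s (r k) i) \<longlonglongrightarrow> \<nu> i" for i
    using tendsto_fst[OF tendsto_snd[OF lim_l]] by (simp add: \<nu>_def)
  have lim_\<omega>: "(\<lambda>k. \<omega>s (r k) i) \<longlonglongrightarrow> \<omega> i" for i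
    using tendsto_snd[OF tendsto_snd[OF lim_l]] by (simp add: \<omega>_def)
  have "KKT_certificate T f g c b x u \<tau> \<nu> \<omega>"
  proof (rule KKT_certificate_limit[OF convex_f g b])
    show "uniform_limit T (\<lambda>k. bs (r k)) b sequentially"
      using filterlim_compose[OF bs filterlim_subseq[OF r]] by (simp add: o_def)
    show "(\<lambda>k. cs (r k)) \<longlonglongrightarrow> c" and "(\<lambda>k. xs (r k)) \<longlonglongrightarrow> x"
      using LIMSEQ_subseq_LIMSEQ[OF cs r] LIMSEQ_subseq_LIMSEQ[OF xs r] by (simp_all add: o_def)
    show "(\<lambda>k. us (r k)) \<longlonglongrightarrow> u"
      using u by (simp add: r_def)
    show "\<forall>i. (\<lambda>k. \<tau>s (r k) i) \<longlonglongrightarrow> \<tau> i"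
      using tendsto_fst[OF lim_l] by (simp add: \<tau>_def)
    show "\<forall>i. \<tau> i \<in> T"
      using l by (auto simp: K_def \<tau>_def mem_Times_iff)
  qed (use cert lim_\<nu> lim_\<omega> in auto)
  then show ?thesis
    using r lim_\<nu> lim_\<omega> by blast
qed


section \<open>Consequences of the Extended Nuernberger Condition\<close>

lemma sum_in_conv_cone:
  assumes "finite I" and "\<forall>i\<in>I. 0 \<le> \<omega> i \<and> \<nu> i \<in> A"
  shows "(\<Sum>i\<in>I. \<omega> i *\<^sub>R \<nu> i) \<in> conv_cone A"
proof -
  define w where "w v = (\<Sum>i\<in>{i\<in>I. \<nu> i = v}. \<omega> i)" for v
  have "(\<Sum>i\<in>I. \<omega> i *\<^sub>R \<nu> i) = (\<Sum>v\<in>\<nu> ` I. \<Sum>i\<in>{i\<in>I. \<nu> i = v}. \<omega> i *\<^sub>R \<nu> i)"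
    by (rule sum.image_gen[OF assms(1)])
  also have "\<dots> = (\<Sum>v\<in>\<nu> ` I. w v *\<^sub>R v)"
    unfolding w_def scaleR_sum_left by (intro sum.cong refl) auto
  finally have "(\<Sum>i\<in>I. \<omega> i *\<^sub>R \<nu> i) = (\<Sum>v\<in>\<nu> ` I. w v *\<^sub>R v)" .
  moreover have "finite (\<nu> ` I)" "\<nu> ` I \<subseteq> A" "\<forall>v\<in>\<nu> ` I. 0 \<le> w v"
    using assms by (auto simp: w_def intro: sum_nonneg)
  ultimately show ?thesis
    unfolding conv_cone_def by blast
qed

lemma ENC_imp_nonempty:
  fixes f :: "real^'n \<Rightarrow> real"
  assumes "ENC T f g c b x" and "x \<in> optset T f g c b"
  shows "T \<noteq> {}"
proof
  assume "T = {}"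
  then have opt: "f x + inner c x \<le> f y + inner c y" for y
    using assms(2) by (simp add: optset_def feas_def)
  have "f x + inner (- c) (y - x) \<le> f y" for y
    using opt[of y] by (simp add: inner_diff_right)
  then have "- c \<in> subdiff f x"
    by (simp add: subdiff_def)
  then have "0 \<in> (\<lambda>u. - (u + c)) ` subdiff f x \<inter> conv_cone (\<Union>t\<in>{}. subdiff (g t) x)"
    by (force simp: conv_cone_def)
  then have "\<exists>D. D \<subseteq> active T g b x \<and> finite D \<and> card D < CARD('n) \<and>
      (\<lambda>u. - (u + c)) ` subdiff f x \<inter> conv_cone (\<Union>t\<in>D. subdiff (g t) x) \<noteq> {}"
    by (intro exI[of _ "{}"]) auto
  then show False
    using assms(1) unfolding ENC_def by (elim conjE notE)
qed

lemma ENC_certificate_positive: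
  fixes f :: "real^'n \<Rightarrow> real" and \<omega> :: "'n \<Rightarrow> real"
  assumes enc: "ENC T f g c b x" and cert: "KKT_certificate T f g c b x u \<tau> \<nu> \<omega>"
  shows "0 < \<omega> i"
proof -
  define I where "I = {i. 0 < \<omega> i}"
  have nonneg: "0 \<le> \<omega> i" for i
    using cert by (simp add: KKT_certificate_def)
  have "- (u + c) = (\<Sum>i\<in>UNIV. \<omega> i *\<^sub>R \<nu> i)"
    using cert by (simp add: KKT_certificate_def)
  also have "\<dots> = (\<Sum>i\<in>I. \<omega> i *\<^sub>R \<nu> i)"
    using nonneg by (intro sum.mono_neutral_right) (auto simp: I_def order_le_less)
  also have "\<dots> \<in> conv_cone (\<Union>t\<in>\<tau> ` I. subdiff (g t) x)"
    using cert by (intro sum_in_conv_cone) (auto simp: KKT_certificate_def I_def)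
  finally have "(\<lambda>u. - (u + c)) ` subdiff f x \<inter> conv_cone (\<Union>t\<in>\<tau> ` I. subdiff (g t) x) \<noteq> {}"
    using cert by (auto simp: KKT_certificate_def)
  moreover have "\<tau> ` I \<subseteq> active T g b x"
    using cert by (auto simp: KKT_certificate_def I_def active_def)
  moreover have "finite (\<tau> ` I)"
    by simp
  moreover have "\<not> (D \<subseteq> active T g b x \<and> finite D \<and> card D < CARD('n) \<and>
      (\<lambda>u. - (u + c)) ` subdiff f x \<inter> conv_cone (\<Union>t\<in>D. subdiff (g t) x) \<noteq> {})" for D
    using enc unfolding ENC_def by blast
  ultimately have "\<not> card (\<tau> ` I) < CARD('n)"
    by blast
  then have "CARD('n) \<le> card (\<tau> ` I)"
    by simp
  also have "\<dots> \<le> card I"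
    by (rule card_image_le) simp
  finally have "I = UNIV"
    by (simp add: card_eq_UNIV_imp_eq_UNIV card_mono order_antisym)
  then show ?thesis
    by (simp add: I_def set_eq_iff)
qed

lemma KKT_certificate_drop_multiplier:
  fixes \<omega> :: "'i::finite \<Rightarrow> real"
  assumes cert: "KKT_certificate T f g c b x u \<tau> \<nu> \<omega>" and pos: "\<forall>i. 0 < \<omega> i"
    and dep: "(\<Sum>i\<in>UNIV. \<beta> i *\<^sub>R \<nu> i) = 0" and "0 < \<beta> j"
  shows "\<exists>\<omega>' i. KKT_certificate T f g c b x u \<tau> \<nu> \<omega>' \<and> \<omega>' i = 0"
proof -
  define I where "I = {i. 0 < \<beta> i}"
  define \<theta> where "\<theta> = Min ((\<lambda>i. \<omega> i / \<beta> i) ` I)"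
  have "I \<noteq> {}"
    using \<open>0 < \<beta> j\<close> by (auto simp: I_def)
  then have "\<theta> \<in> (\<lambda>i. \<omega> i / \<beta> i) ` I"
    unfolding \<theta>_def by (intro Min_in) simp_all
  then obtain i0 where i0: "0 < \<beta> i0" "\<theta> = \<omega> i0 / \<beta> i0"
    by (auto simp: I_def)
  have \<theta>_le: "\<theta> * \<beta> i \<le> \<omega> i" for i
  proof (cases "0 < \<beta> i")
    case True
    then have "\<theta> \<le> \<omega> i / \<beta> i"
      unfolding \<theta>_def by (intro Min_le) (simp_all add: I_def)
    then show ?thesis
      using True by (simp add: pos_le_divide_eq)
  next
    case False
    have "0 \<le> \<theta>"
      using i0 pos by (simp add: less_imp_le)
    then have "\<theta> * \<beta> i \<le> 0"
      using False by (simp add: mult_nonneg_nonpos)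
    then show ?thesis
      using pos[rule_format, of i] by linarith
  qed
  define \<omega>' where "\<omega>' i = \<omega> i - \<theta> * \<beta> i" for i
  have "(\<Sum>i\<in>UNIV. \<omega>' i *\<^sub>R \<nu> i) = (\<Sum>i\<in>UNIV. \<omega> i *\<^sub>R \<nu> i) - \<theta> *\<^sub>R (\<Sum>i\<in>UNIV. \<beta> i *\<^sub>R \<nu> i)"
    by (simp add: \<omega>'_def scaleR_diff_left sum_subtractf scaleR_sum_right)
  then have "- (u + c) = (\<Sum>i\<in>UNIV. \<omega>' i *\<^sub>R \<nu> i)"
    using cert dep by (simp add: KKT_certificate_def)
  then have "KKT_certificate T f g c b x u \<tau> \<nu> \<omega>'"
    using cert \<theta>_le pos unfolding KKT_certificate_def \<omega>'_def by simp
  moreover have "\<omega>' i0 = 0"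
    using i0 by (simp add: \<omega>'_def)
  ultimately show ?thesis
    by blast
qed

lemma ENC_certificate_independent:
  fixes f :: "real^'n \<Rightarrow> real" and \<omega> :: "'n \<Rightarrow> real"
  assumes enc: "ENC T f g c b x" and cert: "KKT_certificate T f g c b x u \<tau> \<nu> \<omega>"
    and dep: "(\<Sum>i\<in>UNIV. \<alpha> i *\<^sub>R \<nu> i) = 0"
  shows "\<alpha> i = 0"
proof (rule ccontr)
  assume "\<alpha> i \<noteq> 0"
  have "\<exists>\<beta>. 0 < \<beta> i \<and> (\<Sum>i\<in>UNIV. \<beta> i *\<^sub>R \<nu> i) = 0"
  proof (cases "0 < \<alpha> i")
    case False
    then show ?thesis
      using \<open>\<alpha> i \<noteq> 0\<close> dep by (intro exI[of _ "\<lambda>j. - \<alpha> j"]) (simp add: sum_negf)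
  qed (use dep in blast)
  then obtain \<beta> where "0 < \<beta> i" and "(\<Sum>i\<in>UNIV. \<beta> i *\<^sub>R \<nu> i) = 0"
    by blast
  then obtain \<omega>' i0 where "KKT_certificate T f g c b x u \<tau> \<nu> \<omega>'" and "\<omega>' i0 = 0"
    using KKT_certificate_drop_multiplier[OF cert] ENC_certificate_positive[OF enc cert] by blast
  then show False
    using ENC_certificate_positive[OF enc, of u \<tau> \<nu> \<omega>' i0] by simp
qed

lemma sum_basis_lower_bound:
  fixes \<nu> :: "'n::finite \<Rightarrow> 'a::euclidean_space"
  assumes "\<forall>\<alpha>::real^'n. (\<Sum>i\<in>UNIV. \<alpha> $ i *\<^sub>R \<nu> i) = 0 \<longrightarrow> \<alpha> = 0"
  shows "\<exists>e>0. \<forall>\<alpha>::real^'n. e * norm \<alpha> \<le> norm (\<Sum>i\<in>UNIV. \<alpha> $ i *\<^sub>R \<nu> i)"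
proof -
  have "bounded_linear (\<lambda>\<alpha>::real^'n. \<Sum>i\<in>UNIV. \<alpha> $ i *\<^sub>R \<nu> i)"
    by (intro bounded_linear_intros bounded_linear_vec_nth)
  then show ?thesis
    using injective_imp_isometric[OF closed_UNIV subspace_UNIV] assms by auto
qed

lemma sum_basis_lower_bound_perturb:
  fixes \<nu> \<nu>0 :: "'n::finite \<Rightarrow> 'a::real_normed_vector"
  assumes bound: "\<forall>\<alpha>::real^'n. e * norm \<alpha> \<le> norm (\<Sum>i\<in>UNIV. \<alpha> $ i *\<^sub>R \<nu>0 i)"
    and close: "(\<Sum>i\<in>UNIV. norm (\<nu> i - \<nu>0 i)) \<le> e / 2"
  shows "e / 2 * norm \<alpha> \<le> norm (\<Sum>i\<in>UNIV. \<alpha> $ i *\<^sub>R \<nu> i)"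
proof -
  have "norm ((\<Sum>i\<in>UNIV. \<alpha> $ i *\<^sub>R \<nu>0 i) - (\<Sum>i\<in>UNIV. \<alpha> $ i *\<^sub>R \<nu> i))
      = norm (\<Sum>i\<in>UNIV. \<alpha> $ i *\<^sub>R (\<nu> i - \<nu>0 i))"
    by (simp add: sum_subtractf scaleR_diff_right norm_minus_commute)
  also have "\<dots> \<le> (\<Sum>i\<in>UNIV. \<bar>\<alpha> $ i\<bar> * norm (\<nu> i - \<nu>0 i))"
    by (rule order_trans[OF norm_sum]) simp
  also have "\<dots> \<le> (\<Sum>i\<in>UNIV. norm \<alpha> * norm (\<nu> i - \<nu>0 i))"
    by (intro sum_mono mult_right_mono component_le_norm_cart norm_ge_zero)
  also have "\<dots> = norm \<alpha> * (\<Sum>i\<in>UNIV. norm (\<nu> i - \<nu>0 i))"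
    by (simp add: sum_distrib_left)
  also have "\<dots> \<le> norm \<alpha> * (e / 2)"
    using close by (rule mult_left_mono) simp
  also have "\<dots> = e / 2 * norm \<alpha>"
    by simp
  finally have "norm ((\<Sum>i\<in>UNIV. \<alpha> $ i *\<^sub>R \<nu>0 i) - (\<Sum>i\<in>UNIV. \<alpha> $ i *\<^sub>R \<nu> i)) \<le> e / 2 * norm \<alpha>" .
  moreover have "e / 2 * norm \<alpha> = e * norm \<alpha> / 2"
    by simp
  ultimately show ?thesis
    using bound[rule_format, of \<alpha>]
      norm_triangle_sub[of "\<Sum>i\<in>UNIV. \<alpha> $ i *\<^sub>R \<nu>0 i" "\<Sum>i\<in>UNIV. \<alpha> $ i *\<^sub>R \<nu> i"]
    by linarith
qed

lemma KKT_certificate_change_cost: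
  fixes \<nu> :: "'n \<Rightarrow> real^'n" and \<omega> :: "'n \<Rightarrow> real"
  assumes cert: "KKT_certificate T f g c b x u \<tau> \<nu> \<omega>" and "0 < e"
    and bound: "\<forall>\<alpha>::real^'n. e * norm \<alpha> \<le> norm (\<Sum>i\<in>UNIV. \<alpha> $ i *\<^sub>R \<nu> i)"
    and small: "\<forall>i. norm (c - c') < e * \<omega> i"
  shows "\<exists>\<omega>'. KKT_certificate T f g c' b x u \<tau> \<nu> \<omega>'"
proof -
  define L where "L \<alpha> = (\<Sum>i\<in>UNIV. \<alpha> $ i *\<^sub>R \<nu> i)" for \<alpha> :: "real^'n"
  have "linear L"
    unfolding L_def by (intro linearI) (simp_all add: scaleR_add_left sum.distrib scaleR_sum_right)
  moreover have "inj L"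
  proof (rule linear_inj_iff_eq_0[THEN iffD2, OF \<open>linear L\<close>], intro allI impI)
    fix \<alpha> assume "L \<alpha> = 0"
    then have "e * norm \<alpha> \<le> 0"
      using bound[rule_format, of \<alpha>] by (simp add: L_def)
    then show "\<alpha> = 0"
      using \<open>0 < e\<close> by (simp add: mult_le_0_iff)
  qed
  ultimately obtain \<mu> where \<mu>: "L \<mu> = c - c'"
    using linear_injective_imp_surjective by (metis surjD)
  have "\<bar>\<mu> $ i\<bar> < \<omega> i" for i
  proof -
    have "e * \<bar>\<mu> $ i\<bar> \<le> e * norm \<mu>"
      using \<open>0 < e\<close> component_le_norm_cart by simp
    also have "\<dots> < e * \<omega> i"
      using bound \<mu> small by (auto simp: L_def intro: le_less_trans)
    finally show ?thesis
      using \<open>0 < e\<close> by simp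
  qed
  then have pos: "0 < \<omega> i + \<mu> $ i" "0 < \<omega> i" for i
    by (smt (verit))+
  have "(\<Sum>i\<in>UNIV. (\<omega> i + \<mu> $ i) *\<^sub>R \<nu> i) = - (u + c) + (c - c')"
    using cert \<mu> by (simp add: KKT_certificate_def L_def scaleR_add_left sum.distrib)
  then have "KKT_certificate T f g c' b x u \<tau> \<nu> (\<lambda>i. \<omega> i + \<mu> $ i)"
    using cert pos by (auto simp: KKT_certificate_def less_imp_le)
  then show ?thesis
    by blast
qed

lemma ENC_certificate_eventually_base_cost:
  fixes f :: "real^'n \<Rightarrow> real" and \<omega> :: "'n \<Rightarrow> real" and \<omega>s :: "nat \<Rightarrow> 'n \<Rightarrow> real"
  assumes enc: "ENC T f g cb bb xb" and cert0: "KKT_certificate T f g cb bb xb u \<tau> \<nu> \<omega>"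
    and cert: "\<forall>k. KKT_certificate T f g (cs k) (bs k) (xs k) (us k) (\<tau>s k) (\<nu>s k) (\<omega>s k)"
    and cs: "cs \<longlonglongrightarrow> cb" and \<nu>s: "\<forall>i. (\<lambda>k. \<nu>s k i) \<longlonglongrightarrow> \<nu> i" and \<omega>s: "\<forall>i. (\<lambda>k. \<omega>s k i) \<longlonglongrightarrow> \<omega> i"
  shows "eventually (\<lambda>k. \<exists>\<omega>'. KKT_certificate T f g cb (bs k) (xs k) (us k) (\<tau>s k) (\<nu>s k) \<omega>') sequentially"
proof -
  have pos: "0 < \<omega> i" for i
    by (rule ENC_certificate_positive[OF enc cert0])
  have "\<forall>\<alpha>::real^'n. (\<Sum>i\<in>UNIV. \<alpha> $ i *\<^sub>R \<nu> i) = 0 \<longrightarrow> \<alpha> = 0"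
    using ENC_certificate_independent[OF enc cert0] by (auto simp: vec_eq_iff)
  then obtain e where e: "0 < e" "\<forall>\<alpha>::real^'n. e * norm \<alpha> \<le> norm (\<Sum>i\<in>UNIV. \<alpha> $ i *\<^sub>R \<nu> i)"
    using sum_basis_lower_bound by blast
  have "(\<lambda>k. \<Sum>i\<in>UNIV. norm (\<nu>s k i - \<nu> i)) \<longlonglongrightarrow> (\<Sum>i\<in>(UNIV::'n set). 0)"
    using \<nu>s by (intro tendsto_sum tendsto_norm_zero LIM_zero) auto
  moreover have "(\<Sum>i\<in>(UNIV::'n set). 0) < e / 2"
    using e(1) by simp
  ultimately have "eventually (\<lambda>k. (\<Sum>i\<in>UNIV. norm (\<nu>s k i - \<nu> i)) < e / 2) sequentially"
    by (rule order_tendstoD(2))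
  moreover have "eventually (\<lambda>k. \<forall>i. \<omega> i / 2 < \<omega>s k i) sequentially"
    using pos \<omega>s by (intro eventually_all_finite order_tendstoD(1)) auto
  moreover have "eventually (\<lambda>k. \<forall>i. norm (cs k - cb) < e / 2 * (\<omega> i / 2)) sequentially"
    using pos e(1)
    by (intro eventually_all_finite order_tendstoD(2)[OF tendsto_norm_zero[OF LIM_zero[OF cs]]])
      (simp add: mult_pos_pos)
  ultimately show ?thesis
  proof eventually_elim
    case (elim k)
    then have "\<forall>\<alpha>::real^'n. e / 2 * norm \<alpha> \<le> norm (\<Sum>i\<in>UNIV. \<alpha> $ i *\<^sub>R \<nu>s k i)"
      using sum_basis_lower_bound_perturb[OF e(2)] by simp
    moreover have "\<forall>i. norm (cs k - cb) < e / 2 * \<omega>s k i"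
      using elim e(1) by (smt (verit) mult_strict_left_mono half_gt_zero)
    ultimately show ?case
      by (rule KKT_certificate_change_cost[OF cert[rule_format, of k] half_gt_zero[OF e(1)]])
  qed
qed


section \<open>Local optimality for the unperturbed cost\<close>

lemma tendsto_le_inverse_Suc:
  fixes X :: "nat \<Rightarrow> 'a::metric_space"
  assumes "\<forall>k. dist (X k) L \<le> inverse (real (Suc k))"
  shows "X \<longlonglongrightarrow> L"
proof -
  have "\<forall>\<^sub>F k in sequentially. norm (dist (X k) L) \<le> inverse (real (Suc k))"
    using assms by (intro always_eventually) simp
  then have "(\<lambda>k. dist (X k) L) \<longlonglongrightarrow> 0"
    by (rule Lim_null_comparison[OF _ LIMSEQ_inverse_real_of_nat])
  then show ?thesis
    by (rule tendsto_dist_iff[THEN iffD2])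
qed

lemma uniform_limit_le_inverse_Suc:
  fixes bs :: "nat \<Rightarrow> 'z \<Rightarrow> 'a::metric_space"
  assumes "\<forall>k. \<forall>t\<in>T. dist (bs k t) (b t) \<le> inverse (real (Suc k))"
  shows "uniform_limit T bs b sequentially"
proof (rule uniform_limitI)
  fix e :: real assume "0 < e"
  then have "eventually (\<lambda>k. inverse (real (Suc k)) < e) sequentially"
    by (rule order_tendstoD(2)[OF LIMSEQ_inverse_real_of_nat])
  then show "\<forall>\<^sub>F k in sequentially. \<forall>t\<in>T. dist (bs k t) (b t) < e"
    by (rule eventually_mono) (use assms in \<open>fastforce intro: le_less_trans\<close>)
qed

lemma bdd_above_abs_image:
  fixes h :: "'z::topological_space \<Rightarrow> real"
  assumes "compact T" and "continuous_on T h"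
  shows "bdd_above (insert 0 ((\<lambda>t. \<bar>h t\<bar>) ` T))"
  using compact_imp_abs_bound[OF assms] by (auto intro: bdd_aboveI2[where M = "max 0 _"])

lemma abs_le_supnorm:
  fixes h :: "'z::topological_space \<Rightarrow> real"
  assumes "compact T" and "continuous_on T h" and "t \<in> T"
  shows "\<bar>h t\<bar> \<le> supnorm T h"
  unfolding supnorm_def using assms by (intro cSup_upper bdd_above_abs_image) auto

lemma supnorm_nonneg:
  fixes h :: "'z::topological_space \<Rightarrow> real"
  assumes "compact T" and "continuous_on T h"
  shows "0 \<le> supnorm T h"
  unfolding supnorm_def using assms by (intro cSup_upper bdd_above_abs_image) auto

lemma abs_diff_le_supnorm:
  assumes "compact T" and "b \<in> CT T" and "b' \<in> CT T" and "t \<in> T"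
  shows "\<bar>b t - b' t\<bar> \<le> supnorm T (\<lambda>t. b t - b' t)"
  using assms by (intro abs_le_supnorm) (auto simp: CT_def intro: continuous_intros)

lemma ENC_optimal_sequence_base_cost:
  fixes f :: "real^'n \<Rightarrow> real" and g :: "'z::metric_space \<Rightarrow> real^'n \<Rightarrow> real"
  assumes T: "compact T" "T \<noteq> {}" and convex_f: "convex_on UNIV f"
    and convex_g: "\<forall>t\<in>T. convex_on UNIV (g t)" and g: "continuous_on (T \<times> UNIV) (\<lambda>(t, x). g t x)"
    and bb: "continuous_on T bb" and enc: "ENC T f g cb bb xb"
    and cs: "cs \<longlonglongrightarrow> cb" and xs: "xs \<longlonglongrightarrow> xb" and bs: "uniform_limit T bs bb sequentially"
    and bs_cont: "\<forall>k. continuous_on T (bs k)"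
    and margin: "0 < \<epsilon>" "\<forall>k. \<forall>t\<in>T. g t xh \<le> bs k t - \<epsilon>"
    and opt: "\<forall>k. xs k \<in> optset T f g (cs k) (bs k)"
  shows "\<exists>k. xs k \<in> optset T f g cb (bs k)"
proof -
  have "g t xh < bs k t" if "t \<in> T" for k t
  proof -
    have "g t xh \<le> bs k t - \<epsilon>"
      using margin(2) that by blast
    then show ?thesis
      using margin(1) by linarith
  qed
  then have "slater T g (bs k)" for k
    unfolding slater_def by blast
  then have "\<forall>k. \<exists>u \<tau> \<nu> (\<omega> :: 'n \<Rightarrow> real). KKT_certificate T f g (cs k) (bs k) (xs k) u \<tau> \<nu> \<omega>"
    using optimal_imp_KKT_certificate[OF T(1) convex_f convex_g g] bs_cont opt T(2) by blast
  then obtain us \<tau>s \<nu>s and \<omega>s :: "nat \<Rightarrow> 'n \<Rightarrow> real"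
    where cert: "\<forall>k. KKT_certificate T f g (cs k) (bs k) (xs k) (us k) (\<tau>s k) (\<nu>s k) (\<omega>s k)"
    by metis
  obtain B where "\<forall>k. norm (us k) \<le> B \<and> (\<forall>i. norm (\<nu>s k i) \<le> B \<and> \<omega>s k i \<le> B)"
    using KKT_certificates_bounded[OF T(1) convex_f g cs xs margin cert] by blast
  then obtain r u \<tau> \<nu> \<omega> where r: "strict_mono r" and cert0: "KKT_certificate T f g cb bb xb u \<tau> \<nu> \<omega>"
    and "\<forall>i. (\<lambda>k. \<nu>s (r k) i) \<longlonglongrightarrow> \<nu> i" "\<forall>i. (\<lambda>k. \<omega>s (r k) i) \<longlonglongrightarrow> \<omega> i"
    using KKT_certificates_convergent_subseq[OF T(1) convex_f g bb cs xs bs cert] by blast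
  moreover have "(\<lambda>k. cs (r k)) \<longlonglongrightarrow> cb"
    using LIMSEQ_subseq_LIMSEQ[OF cs r] by (simp add: o_def)
  ultimately have "eventually (\<lambda>k. \<exists>\<omega>'. KKT_certificate T f g cb (bs (r k)) (xs (r k)) (us (r k))
      (\<tau>s (r k)) (\<nu>s (r k)) \<omega>') sequentially"
    using cert by (intro ENC_certificate_eventually_base_cost[OF enc cert0]) auto
  then obtain k \<omega>' where "KKT_certificate T f g cb (bs (r k)) (xs (r k)) (us (r k)) (\<tau>s (r k)) (\<nu>s (r k)) \<omega>'"
    using eventually_happens'[OF sequentially_bot] by blast
  moreover have "xs (r k) \<in> feas T g (bs (r k))"
    using opt by (simp add: optset_def)
  ultimately show ?thesis
    using KKT_certificate_imp_optimal by blast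
qed

lemma ENC_locally_optimal_base_cost:
  fixes f :: "real^'n \<Rightarrow> real" and g :: "'z::metric_space \<Rightarrow> real^'n \<Rightarrow> real"
  assumes T: "compact T" and convex_f: "convex_on UNIV f"
    and convex_g: "\<forall>t\<in>T. convex_on UNIV (g t)" and g: "continuous_on (T \<times> UNIV) (\<lambda>(t, x). g t x)"
    and bb: "bb \<in> CT T" and opt: "xb \<in> optset T f g cb bb" and enc: "ENC T f g cb bb xb"
  shows "\<exists>\<delta>>0. \<forall>c b x. norm (c - cb) < \<delta> \<longrightarrow> b \<in> CT T \<longrightarrow> supnorm T (\<lambda>t. b t - bb t) < \<delta> \<longrightarrow>
           x \<in> optset T f g c b \<longrightarrow> dist x xb < \<delta> \<longrightarrow> x \<in> optset T f g cb b"
proof (rule ccontr)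
  assume contra: "\<not> ?thesis"
  have "slater T g bb" and bb_cont: "continuous_on T bb"
    using enc bb by (simp_all add: ENC_def CT_def)
  then obtain xh \<epsilon> where \<epsilon>: "0 < \<epsilon>" and margin: "\<forall>t\<in>T. g t xh \<le> bb t - \<epsilon>"
    using slater_uniform_margin[OF T g] by blast
  define \<delta> where "\<delta> k = min (\<epsilon> / 2) (inverse (real (Suc k)))" for k
  define bad where "bad \<delta> c b x \<longleftrightarrow> norm (c - cb) < \<delta> \<and> b \<in> CT T \<and> supnorm T (\<lambda>t. b t - bb t) < \<delta> \<and>
      x \<in> optset T f g c b \<and> dist x xb < \<delta> \<and> x \<notin> optset T f g cb b" for \<delta> c b x
  have "0 < \<delta> k" for k
    using \<epsilon> by (simp add: \<delta>_def)
  then have "\<exists>c b x. bad (\<delta> k) c b x" for k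
    using contra unfolding bad_def by blast
  then obtain cs bs xs where "\<forall>k. bad (\<delta> k) (cs k) (bs k) (xs k)"
    by metis
  then have cs: "dist (cs k) cb < \<delta> k" and bs: "bs k \<in> CT T" "supnorm T (\<lambda>t. bs k t - bb t) < \<delta> k"
    and xs: "xs k \<in> optset T f g (cs k) (bs k)" "dist (xs k) xb < \<delta> k" "xs k \<notin> optset T f g cb (bs k)"
    for k
    by (simp_all add: bad_def dist_norm)
  have close: "dist (bs k t) (bb t) < \<delta> k" if "t \<in> T" for k t
    using abs_diff_le_supnorm[OF T bs(1)[of k] bb that] bs(2)[of k] by (simp add: dist_real_def)
  have \<delta>_le: "\<delta> k \<le> \<epsilon> / 2" "\<delta> k \<le> inverse (real (Suc k))" for k
    by (simp_all add: \<delta>_def)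
  then have below_inverse: "r < \<delta> k \<Longrightarrow> r \<le> inverse (real (Suc k))" for r k
    by (meson less_imp_le order_trans)
  have "\<exists>k. xs k \<in> optset T f g cb (bs k)"
  proof (rule ENC_optimal_sequence_base_cost[OF T ENC_imp_nonempty[OF enc opt] convex_f convex_g g bb_cont enc])
    show "cs \<longlonglongrightarrow> cb" and "xs \<longlonglongrightarrow> xb"
      using cs xs(2) below_inverse by (auto intro!: tendsto_le_inverse_Suc)
    show "uniform_limit T bs bb sequentially"
      using close below_inverse by (auto intro!: uniform_limit_le_inverse_Suc)
    show "\<forall>k. \<forall>t\<in>T. g t xh \<le> bs k t - \<epsilon> / 2"
    proof (intro allI ballI)
      fix k t assume "t \<in> T"
      then show "g t xh \<le> bs k t - \<epsilon> / 2"
        using margin close[of t k] \<delta>_le(1)[of k] by (fastforce simp: dist_real_def)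
    qed
    show "\<forall>k. continuous_on T (bs k)"
      using bs(1) by (simp add: CT_def)
  qed (use \<epsilon> xs(1) in auto)
  then show False
    using xs(3) by blast
qed


section \<open>Calmness moduli\<close>

lemma clm_quot_mono:
  assumes "0 \<le> s" and "s \<le> p" and "0 \<le> d" and "0 < q"
  shows "clm_quot q s d \<le> clm_quot q p d"
  using assms unfolding clm_quot_def by (auto intro!: divide_right_mono powr_mono2)

lemma clm_le_clm:
  assumes "S yb = S' yb'" and "0 < q" and "0 < r"
    and dominated: "\<And>y' x. y' \<in> Y' \<Longrightarrow> x \<in> S' y' \<Longrightarrow> d' y' yb' < r \<Longrightarrow> dist x xb < r \<Longrightarrow>
      \<exists>y\<in>Y. x \<in> S y \<and> 0 \<le> d y yb \<and> d y yb \<le> d' y' yb'"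
  shows "clm q Y d S yb xb \<le> clm q Y' d' S' yb' xb"
  unfolding clm_def
proof (rule SUP_mono)
  fix \<delta> :: real assume "\<delta> \<in> {0<..}"
  let ?A = "{(y, x). y \<in> Y \<and> x \<in> S y \<and> d y yb < \<delta> \<and> dist x xb < \<delta>}"
  let ?B = "{(y, x). y \<in> Y' \<and> x \<in> S' y \<and> d' y yb' < min \<delta> r \<and> dist x xb < min \<delta> r}"
  let ?F = "\<lambda>yx. clm_quot q (d (fst yx) yb) (infdist (snd yx) (S yb))"
  let ?G = "\<lambda>yx. clm_quot q (d' (fst yx) yb') (infdist (snd yx) (S' yb'))"
  have "(INF yx\<in>?A. ?F yx) \<le> (INF yx\<in>?B. ?G yx)"
  proof (rule INF_mono)
    fix m assume "m \<in> ?B"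
    then obtain y' x where m: "m = (y', x)" and "y' \<in> Y'" "x \<in> S' y'"
      and close: "d' y' yb' < min \<delta> r" "dist x xb < min \<delta> r"
      by blast
    then obtain y where y: "y \<in> Y" "x \<in> S y" "0 \<le> d y yb" "d y yb \<le> d' y' yb'"
      using dominated by (meson min_less_iff_conj)
    then have "(y, x) \<in> ?A"
      using close by auto
    moreover have "?F (y, x) \<le> ?G m"
      using y assms(1,2) by (simp add: m clm_quot_mono infdist_nonneg)
    ultimately show "\<exists>n\<in>?A. ?F n \<le> ?G m"
      by blast
  qed
  moreover have "min \<delta> r \<in> {0<..}"
    using \<open>\<delta> \<in> {0<..}\<close> \<open>0 < r\<close> by simp
  ultimately show "\<exists>\<delta>'\<in>{0<..}. (INF yx\<in>?A. ?F yx)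
      \<le> (INF yx\<in>{(y, x). y \<in> Y' \<and> x \<in> S' y \<and> d' y yb' < \<delta>' \<and> dist x xb < \<delta>'}. ?G yx)"
    by blast
qed

theorem theorem4p10:
  fixes T :: "'z::metric_space set"
    and f :: "real^'n \<Rightarrow> real"
    and g :: "'z \<Rightarrow> real^'n \<Rightarrow> real"
    and q :: real and cb :: "real^'n" and bb :: "'z \<Rightarrow> real" and xb :: "real^'n"
  assumes "compact T" and "T \<noteq> UNIV"
    and "convex_on UNIV f"
    and "\<forall>t\<in>T. convex_on UNIV (g t)"
    and "continuous_on (T \<times> UNIV) (\<lambda>(t, x). g t x)"
    and "0 < q" and "q \<le> 1"
    and "bb \<in> CT T"
    and "xb \<in> optset T f g cb bb"
    and "ENC T f g cb bb xb"
  shows "clm q (UNIV \<times> CT T) (pdist T) (\<lambda>(c, b). optset T f g c b) (cb, bb) xb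
       = clm q (CT T) (\<lambda>b b'. supnorm T (\<lambda>t. b t - b' t)) (\<lambda>b. optset T f g cb b) bb xb"
proof (rule antisym)
  have dist_nonneg: "0 \<le> supnorm T (\<lambda>t. b t - bb t)" if "b \<in> CT T" for b
    using that assms(1,8) by (intro supnorm_nonneg) (auto simp: CT_def intro!: continuous_intros)
  show "clm q (UNIV \<times> CT T) (pdist T) (\<lambda>(c, b). optset T f g c b) (cb, bb) xb
      \<le> clm q (CT T) (\<lambda>b b'. supnorm T (\<lambda>t. b t - b' t)) (\<lambda>b. optset T f g cb b) bb xb"
  proof (rule clm_le_clm[where r = 1])
    fix b x assume "b \<in> CT T" and "x \<in> optset T f g cb b"
    then show "\<exists>y\<in>UNIV \<times> CT T. x \<in> (\<lambda>(c, b). optset T f g c b) y \<and>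
        0 \<le> pdist T y (cb, bb) \<and> pdist T y (cb, bb) \<le> supnorm T (\<lambda>t. b t - bb t)"
      using dist_nonneg by (intro bexI[of _ "(cb, b)"]) (auto simp: pdist_def)
  qed (use \<open>0 < q\<close> in auto)
  obtain \<delta>0 where "0 < \<delta>0" and \<delta>0: "\<forall>c b x. norm (c - cb) < \<delta>0 \<longrightarrow> b \<in> CT T \<longrightarrow>
      supnorm T (\<lambda>t. b t - bb t) < \<delta>0 \<longrightarrow> x \<in> optset T f g c b \<longrightarrow> dist x xb < \<delta>0 \<longrightarrow>
      x \<in> optset T f g cb b"
    using ENC_locally_optimal_base_cost[OF assms(1,3,4,5,8,9,10)] by blast
  show "clm q (CT T) (\<lambda>b b'. supnorm T (\<lambda>t. b t - b' t)) (\<lambda>b. optset T f g cb b) bb xb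
      \<le> clm q (UNIV \<times> CT T) (pdist T) (\<lambda>(c, b). optset T f g c b) (cb, bb) xb"
    using \<open>0 < q\<close> \<open>0 < \<delta>0\<close> \<delta>0 dist_nonneg
    by (intro clm_le_clm[where r = \<delta>0]) (fastforce simp: pdist_def)+
qed

end
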